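(* Let $q$ be a prime power and let $m$ be an integer with $1\leq m\leq q-1$. Let $W_m(q)$ be the Wenger graph defined below. Then the distinct eigenvalues of the adjacency matrix of $W_m(q)$ are $$\pm q,\ \pm\sqrt{mq},\ \pm\sqrt{(m-1)q},\ \ldots,\ \pm\sqrt{2q},\ \pm\sqrt{q},\ 0.$$ Moreover, for each $0\leq i\leq m$, the multiplicity of the eigenvalue $\pm\sqrt{iq}$ of $W_m(q)$ is $$(q-1)\binom{q}{i}\sum_{d=i}^{m}\sum_{k=0}^{d-i}(-1)^k\binom{q-i}{k}q^{d-i-k}.$$
   Context: Let $q=p^e$ with $p$ prime and $e\geq 1$, and let $\mathbb{F}_q$ be the finite field with $q$ elements. For $m\geq 1$, the Wenger graph $W_m(q)$ is the bipartite graph with partite sets $P$ and $L$, two disjoint copies of $\mathbb{F}_q^{m+1}$ (elements of $P$ are written $(p)=(p_1,\ldots,p_{m+1})$ and called points, elements of $L$ are written $[l]=[l_1,\ldots,l_{m+1}]$ and called lines), where a point $(p)$ is adjacent to a line $[l]$ if and only if $l_{i+1}+p_{i+1}=l_i p_1$ for all $i=1,\ldots,m$. The eigenvalues of a graph are those of its adjacency matrix. *)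

theory Defs
  imports "Jordan_Normal_Form.Char_Poly"
begin

text \<open>Finite field F_q: a type of class field and finite; q = CARD('a).
  Vectors of F_q^(m+1) are lists of length m+1; entry p_j is p ! (j-1).
  Vertices: Inl p = point (p), Inr l = line [l].\<close>

definition wenger_incident :: "nat \<Rightarrow> 'a::field list \<Rightarrow> 'a list \<Rightarrow> bool" where
  "wenger_incident m p l \<longleftrightarrow>
     (\<forall>i\<in>{1..m}. l ! i + p ! i = l ! (i - 1) * p ! 0)"

definition wenger_vertices :: "nat \<Rightarrow> ('a::field list + 'a list) set" where
  "wenger_vertices m = Inl ` {p. length p = Suc m} \<union> Inr ` {l. length l = Suc m}"

definition wenger_adj :: "nat \<Rightarrow> ('a::field list + 'a list) \<Rightarrow> ('a list + 'a list) \<Rightarrow> bool" where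
  "wenger_adj m x y = (case (x, y) of
      (Inl p, Inr l) \<Rightarrow> wenger_incident m p l
    | (Inr l, Inl p) \<Rightarrow> wenger_incident m p l
    | _ \<Rightarrow> False)"

text \<open>A fixed (arbitrary) enumeration of the vertices; the spectrum does not depend on it.\<close>
definition wenger_vertex_list :: "nat \<Rightarrow> ('a::{field,finite} list + 'a list) list" where
  "wenger_vertex_list m = (SOME xs. distinct xs \<and> set xs = wenger_vertices m)"

definition wenger_matrix :: "nat \<Rightarrow> ('a::{field,finite} itself) \<Rightarrow> real mat" where
  "wenger_matrix m (_ :: 'a itself) =
     (let vs = (wenger_vertex_list m :: ('a list + 'a list) list) in
      mat (length vs) (length vs)
        (\<lambda>(i, j). if wenger_adj m (vs ! i) (vs ! j) then 1 else 0))"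

definition wenger_mult :: "nat \<Rightarrow> nat \<Rightarrow> nat \<Rightarrow> int" where
  "wenger_mult q m i = (int q - 1) * int (q choose i) *
     (\<Sum>d = i..m. \<Sum>k = 0..d - i. (-1) ^ k * int ((q - i) choose k) * int q ^ (d - i - k))"

end

theory Submission
  imports Defs "HOL-Library.Cardinality"
begin

text \<open>
  The adjacency operator is diagonalised by an explicit orthogonal eigenbasis indexed by
  polynomials over \<open>\<F>\<^sub>q\<close> of degree at most \<open>m\<close>. For a polynomial \<open>P\<close> let
  \<open>\<psi>\<^sub>P(l) = \<psi>(\<langle>P, l\<rangle>)\<close> on lines, where \<open>\<langle>P, l\<rangle> = \<Sum> coeff P i * l\<^sub>i\<close> and \<open>\<psi>\<close> is a
  nontrivial "wave" on \<open>\<F>\<^sub>q\<close>. Summing \<open>\<psi>\<^sub>P\<close> over the \<open>q\<close> points of a line and then over the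
  \<open>q\<close> lines through each of these points multiplies \<open>\<psi>\<^sub>P\<close> by \<open>q\<close> times the number of roots
  of \<open>P\<close> in \<open>\<F>\<^sub>q\<close>. Hence each \<open>P\<close> with \<open>i > 0\<close> roots yields the two eigenvalues
  \<open>\<plusminus>\<surd>(iq)\<close> (\<open>P = 0\<close> gives \<open>\<plusminus>q\<close>), each root-free \<open>P\<close> yields the eigenvalue \<open>0\<close>, and a further
  eigenvalue-\<open>0\<close> family supported on points comes from the fibres of polynomials without
  constant term. These \<open>2q\<^sup>m\<^sup>+\<^sup>1\<close> vectors are pairwise orthogonal, so they form an eigenbasis,
  and the multiplicity of \<open>\<plusminus>\<surd>(iq)\<close> is the number of polynomials of degree at most \<open>m\<close>
  with exactly \<open>i\<close> distinct roots, which inclusion-exclusion over root sets evaluates.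
\<close>

section \<open>Characteristic polynomials from an orthogonal eigenbasis\<close>

lemma sum_nth_distinct:
  assumes "distinct vs"
  shows "(\<Sum>i<length vs. g (vs ! i)) = (\<Sum>w\<in>set vs. g w)"
  using sum.reindex_bij_betw[OF bij_betw_nth[OF assms refl refl], of g] by simp

lemma char_poly_eq_prod_if_diagonalised:
  fixes A P Q :: "'a::field mat" and d :: "nat \<Rightarrow> 'a"
  assumes A: "A \<in> carrier_mat n n" and P: "P \<in> carrier_mat n n" and Q: "Q \<in> carrier_mat n n"
    and QP: "Q * P = 1\<^sub>m n"
    and AP: "A * P = P * mat n n (\<lambda>(i, k). if i = k then d i else 0)"
  shows "char_poly A = (\<Prod>k\<leftarrow>[0..<n]. [:- d k, 1:])"
proof -
  define D where "D = mat n n (\<lambda>(i, k). if i = k then d i else 0)"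
  have D: "D \<in> carrier_mat n n" by (simp add: D_def)
  have PQ: "P * Q = 1\<^sub>m n" using mat_mult_left_right_inverse[OF Q P QP] .
  have "A = A * P * Q" using A P Q PQ by (simp add: assoc_mult_mat)
  also have "\<dots> = P * D * Q" using AP by (simp add: D_def)
  finally have "similar_mat A D" by (intro similar_matI[OF _ PQ QP]) (use A P Q D in auto)
  then have "char_poly A = char_poly D" by (rule char_poly_similar)
  also have "\<dots> = (\<Prod>a\<leftarrow>diag_mat D. [:- a, 1:])"
    by (rule char_poly_upper_triangular[OF D]) (auto simp: upper_triangular_def D_def)
  also have "diag_mat D = map d [0..<n]"
    by (rule nth_equalityI) (auto simp: diag_mat_def D_def)
  finally show ?thesis by (simp add: comp_def)
qed

text \<open>
  If the real kernel \<open>R\<close> has \<open>length vs\<close> pairwise orthogonal complex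
  eigenvectors \<open>f j\<close> with eigenvalues \<open>d j\<close>, its matrix has characteristic polynomial
  \<open>\<Prod>j (X - d j)\<close>: the eigenvectors form an invertible matrix whose inverse is read off
  from the orthogonality relations.
\<close>
lemma char_poly_orthogonal_eigenbasis:
  fixes R :: "'v \<Rightarrow> 'v \<Rightarrow> real" and f :: "'j \<Rightarrow> 'v \<Rightarrow> complex"
    and d :: "'j \<Rightarrow> real" and c :: "'j \<Rightarrow> complex"
  assumes vs: "distinct vs" and J: "finite J" "card J = length vs"
    and eig: "\<And>j v. j \<in> J \<Longrightarrow> v \<in> set vs \<Longrightarrow>
        (\<Sum>w\<in>set vs. complex_of_real (R v w) * f j w) = complex_of_real (d j) * f j v"
    and orth: "\<And>j j'. j \<in> J \<Longrightarrow> j' \<in> J \<Longrightarrow>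
        (\<Sum>v\<in>set vs. cnj (f j v) * f j' v) = (if j = j' then c j else 0)"
    and cnz: "\<And>j. j \<in> J \<Longrightarrow> c j \<noteq> 0"
  shows "char_poly (map_mat complex_of_real (mat (length vs) (length vs) (\<lambda>(i,k). R (vs!i) (vs!k))))
         = (\<Prod>j\<in>J. [:- complex_of_real (d j), 1:])"
proof -
  define n where "n = length vs"
  obtain js where js: "distinct js" "set js = J"
    using J(1) finite_distinct_list by blast
  have ljs: "length js = n" using J js distinct_card n_def by fastforce
  have jsJ: "k < n \<Longrightarrow> js ! k \<in> J" for k using js ljs by auto
  define A where "A = map_mat complex_of_real (mat n n (\<lambda>(i,k). R (vs!i) (vs!k)))"
  define P where "P = mat n n (\<lambda>(i,k). f (js!k) (vs!i))"
  define Q where "Q = mat n n (\<lambda>(k,i). cnj (f (js!k) (vs!i)) / c (js!k))"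
  have QP: "Q * P = 1\<^sub>m n"
  proof (rule eq_matI)
    fix k k' assume "k < dim_row (1\<^sub>m n)" and "k' < dim_col (1\<^sub>m n)"
    hence kn: "k < n" "k' < n" by auto
    have "(Q * P) $$ (k, k') = (\<Sum>i<n. cnj (f (js!k) (vs!i)) * f (js!k') (vs!i)) / c (js!k)"
      using kn by (simp add: Q_def P_def scalar_prod_def lessThan_atLeast0 sum_divide_distrib)
    also have "\<dots> = (\<Sum>v\<in>set vs. cnj (f (js!k) v) * f (js!k') v) / c (js!k)"
      using sum_nth_distinct[OF vs, of "\<lambda>v. cnj (f (js!k) v) * f (js!k') v"] n_def by simp
    also have "\<dots> = (if k = k' then 1 else 0)"
      using orth[OF jsJ jsJ, OF kn] cnz[OF jsJ[OF kn(1)]] nth_eq_iff_index_eq[OF js(1)] ljs kn by auto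
    finally show "(Q * P) $$ (k, k') = 1\<^sub>m n $$ (k, k')" using kn by simp
  qed (auto simp: Q_def P_def)
  have AP: "A * P = P * mat n n (\<lambda>(i, k). if i = k then complex_of_real (d (js!i)) else 0)"
  proof (rule eq_matI)
    fix i k assume "i < dim_row (P * mat n n (\<lambda>(i, k). if i = k then complex_of_real (d (js!i)) else 0))"
      and "k < dim_col (P * mat n n (\<lambda>(i, k). if i = k then complex_of_real (d (js!i)) else 0))"
    hence ik: "i < n" "k < n" by (auto simp: P_def)
    have "(A * P) $$ (i, k) = (\<Sum>w\<in>set vs. complex_of_real (R (vs!i) w) * f (js!k) w)"
      using ik sum_nth_distinct[OF vs, of "\<lambda>w. complex_of_real (R (vs!i) w) * f (js!k) w"]
      by (simp add: A_def P_def n_def scalar_prod_def lessThan_atLeast0)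
    also have "\<dots> = f (js!k) (vs!i) * complex_of_real (d (js!k))"
      using eig[OF jsJ[OF ik(2)], of "vs!i"] ik by (simp add: n_def mult.commute)
    finally show "(A * P) $$ (i, k)
        = (P * mat n n (\<lambda>(i, k). if i = k then complex_of_real (d (js!i)) else 0)) $$ (i, k)"
      using ik by (simp add: P_def scalar_prod_def lessThan_atLeast0 if_distrib[of "(*) _"]
          sum.delta cong: if_cong)
  qed (auto simp: A_def P_def)
  have "char_poly A = (\<Prod>k\<leftarrow>[0..<n]. [:- complex_of_real (d (js!k)), 1:])"
    by (rule char_poly_eq_prod_if_diagonalised[OF _ _ _ QP AP]) (auto simp: A_def P_def Q_def)
  also have "\<dots> = (\<Prod>j\<leftarrow>map ((!) js) [0..<length js]. [:- complex_of_real (d j), 1:])"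
    by (simp add: ljs comp_def)
  also have "\<dots> = (\<Prod>j\<in>J. [:- complex_of_real (d j), 1:])"
    using prod.distinct_set_conv_list[OF js(1), of "\<lambda>j. [:- complex_of_real (d j), 1:]"] js(2)
    by (simp only: map_nth)
  finally show ?thesis by (simp add: A_def n_def)
qed

lemma order_prod_linear_factors:
  fixes d :: "'j \<Rightarrow> 'b::idom"
  assumes "finite J"
  shows "order x (\<Prod>j\<in>J. [:- d j, 1:]) = card {j\<in>J. d j = x}"
  using assms
proof (induction J rule: finite_induct)
  case empty
  then show ?case by (simp add: order_0I)
next
  case (insert j J)
  have nz: "(\<Prod>j\<in>J. [:- d j, 1:]) \<noteq> 0" by (simp add: prod_zero_iff insert)
  have l0: "[:- d j, 1:] \<noteq> 0" by simp
  have nz2: "[:- d j, 1:] * (\<Prod>j\<in>J. [:- d j, 1:]) \<noteq> 0" using nz l0 mult_eq_0_iff by blast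
  have "order x (\<Prod>j\<in>insert j J. [:- d j, 1:])
      = order x [:- d j, 1:] + order x (\<Prod>j\<in>J. [:- d j, 1:])"
    using insert order_mult[OF nz2] by simp
  also have "order x [:- d j, 1:] = (if d j = x then 1 else 0)"
    using order_linear'[of x "- d j"] by auto
  finally have e: "order x (\<Prod>j\<in>insert j J. [:- d j, 1:])
      = (if d j = x then 1 else 0) + card {j\<in>J. d j = x}"
    using insert by simp
  have "{i\<in>insert j J. d i = x} = (if d j = x then insert j {i\<in>J. d i = x} else {i\<in>J. d i = x})"
    by auto
  then show ?case using e insert by auto
qed

section \<open>Incidence structure of the Wenger graph\<close>

definition vecs :: "nat \<Rightarrow> 'a list set" where
  "vecs m = {l. length l = Suc m}"

text \<open>
  Solving the incidence equations \<open>l\<^sub>i = l\<^sub>i\<^sub>-\<^sub>1 p\<^sub>0 - p\<^sub>i\<close> (coordinates indexed from \<open>0\<close>)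
  for a line \<open>l\<close> with prescribed first coordinate \<open>t\<close> gives
  \<open>l\<^sub>i = t p\<^sub>0\<^sup>i - horner p i\<close>, where \<open>horner p i = p\<^sub>1 p\<^sub>0\<^sup>i\<^sup>-\<^sup>1 + \<dots> + p\<^sub>i\<close>; dually the point on \<open>l\<close> with
  first coordinate \<open>s\<close> has \<open>p\<^sub>i = l\<^sub>i\<^sub>-\<^sub>1 s - l\<^sub>i\<close>. So every vertex has exactly \<open>q\<close> neighbours,
  parametrised by their first coordinate.
\<close>
fun horner :: "'a::field list \<Rightarrow> nat \<Rightarrow> 'a" where
  "horner p 0 = 0"
| "horner p (Suc i) = p!0 * horner p i + p!(Suc i)"

definition line_through :: "nat \<Rightarrow> 'a::field list \<Rightarrow> 'a \<Rightarrow> 'a list" where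
  "line_through m p t = map (\<lambda>i. t * (p!0)^i - horner p i) [0..<Suc m]"

definition point_on :: "nat \<Rightarrow> 'a::field list \<Rightarrow> 'a \<Rightarrow> 'a list" where
  "point_on m l s = map (\<lambda>i. if i = 0 then s else l!(i-1) * s - l!i) [0..<Suc m]"

definition powers_vec :: "nat \<Rightarrow> 'a::field \<Rightarrow> 'a list" where
  "powers_vec m s = map (\<lambda>i. s^i) [0..<Suc m]"

definition add_scaled :: "'a::field list \<Rightarrow> 'a \<Rightarrow> 'a list \<Rightarrow> 'a list" where
  "add_scaled v t u = map (\<lambda>i. v!i + t * u!i) [0..<length v]"

definition coeff_dot :: "nat \<Rightarrow> 'a::field poly \<Rightarrow> 'a list \<Rightarrow> 'a" where
  "coeff_dot m P l = (\<Sum>i\<le>m. coeff P i * l!i)"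

definition horner_vec :: "nat \<Rightarrow> 'a::field list \<Rightarrow> 'a list" where
  "horner_vec m p = map (\<lambda>i. if i = 0 then p!0 else horner p i) [0..<Suc m]"

lemma length_line_through[simp]: "length (line_through m p t) = Suc m" by (simp add: line_through_def)
lemma length_point_on[simp]: "length (point_on m l s) = Suc m" by (simp add: point_on_def)
lemma length_powers_vec[simp]: "length (powers_vec m s) = Suc m" by (simp add: powers_vec_def)
lemma length_add_scaled[simp]: "length (add_scaled v t u) = length v" by (simp add: add_scaled_def)
lemma length_horner_vec[simp]: "length (horner_vec m p) = Suc m" by (simp add: horner_vec_def)

lemma nth_line_through: "i \<le> m \<Longrightarrow> line_through m p t ! i = t * (p!0)^i - horner p i"
  by (simp add: line_through_def del: upt_Suc)
lemma nth_point_on: "i \<le> m \<Longrightarrow> point_on m l s ! i = (if i = 0 then s else l!(i-1) * s - l!i)"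
  by (simp add: point_on_def del: upt_Suc)
lemma nth_powers_vec: "i \<le> m \<Longrightarrow> powers_vec m s ! i = s^i"
  by (simp add: powers_vec_def del: upt_Suc)
lemma nth_add_scaled: "i < length v \<Longrightarrow> add_scaled v t u ! i = v!i + t * u!i"
  by (simp add: add_scaled_def)
lemma nth_horner_vec: "i \<le> m \<Longrightarrow> horner_vec m p ! i = (if i = 0 then p!0 else horner p i)"
  by (simp add: horner_vec_def del: upt_Suc)

lemma hd_line_through[simp]: "line_through m p t ! 0 = t" by (simp add: nth_line_through)
lemma hd_point_on[simp]: "point_on m l s ! 0 = s" by (simp add: nth_point_on)

lemma incident_line_through: "wenger_incident m p (line_through m p t)"
  unfolding wenger_incident_def
proof
  fix i assume i: "i \<in> {1..m}"
  then obtain k where k: "i = Suc k" "k < m" by (cases i) auto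
  show "line_through m p t ! i + p ! i = line_through m p t ! (i - 1) * p ! 0"
    using k by (simp add: nth_line_through algebra_simps)
qed

lemma incident_point_on: "wenger_incident m (point_on m l s) l"
  unfolding wenger_incident_def
  by (auto simp: nth_point_on)

lemma incident_imp_eq_line_through:
  assumes "l \<in> vecs m" "wenger_incident m p l"
  shows "l = line_through m p (l!0)"
proof -
  have closed_form: "l!i = l!0 * (p!0)^i - horner p i" if "i \<le> m" for i
    using that
  proof (induction i)
    case (Suc k)
    have "Suc k \<in> {1..m}" using Suc.prems by auto
    then have "l ! Suc k + p ! Suc k = l ! k * p ! 0"
      using assms(2) unfolding wenger_incident_def by fastforce
    then show ?case using Suc by (simp add: algebra_simps)
  qed simp
  show ?thesis
  proof (intro nth_equalityI)
    show "length l = length (line_through m p (l!0))" using assms(1) by (simp add: vecs_def)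
    fix i assume "i < length l"
    then have i: "i \<le> m" using assms(1) by (simp add: vecs_def)
    have "l!i = l!0 * (p!0)^i - horner p i" using closed_form i by blast
    then show "l!i = line_through m p (l!0) ! i" using i by (simp only: nth_line_through)
  qed
qed

lemma incident_imp_eq_point_on:
  assumes "p \<in> vecs m" "wenger_incident m p l"
  shows "p = point_on m l (p!0)"
proof (intro nth_equalityI)
  show "length p = length (point_on m l (p!0))" using assms by (simp add: vecs_def)
  fix i assume "i < length p"
  then have i: "i \<le> m" using assms by (simp add: vecs_def)
  show "p ! i = point_on m l (p!0) ! i"
  proof (cases i)
    case 0 then show ?thesis by simp
  next
    case (Suc k)
    then have "i \<in> {1..m}" using i by auto
    then have "l ! i + p ! i = l ! (i-1) * p ! 0" using assms(2) unfolding wenger_incident_def by blast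
    then have "p ! i = l ! (i-1) * p ! 0 - l ! i" by (simp add: eq_diff_eq add.commute)
    then show ?thesis using i Suc by (simp add: nth_point_on)
  qed
qed

lemma horner_point_on: "i \<le> m \<Longrightarrow> horner (point_on m l s) i = l!0 * s^i - l!i"
proof (induction i)
  case 0 then show ?case by simp
next
  case (Suc k)
  then have ih: "horner (point_on m l s) k = l!0 * s^k - l!k" by simp
  show ?case using Suc.prems by (simp add: nth_point_on ih algebra_simps)
qed

lemma line_through_point_on:
  assumes "l \<in> vecs m"
  shows "line_through m (point_on m l s) t = add_scaled l (t - l!0) (powers_vec m s)"
  using assms by (intro nth_equalityI) (auto simp: vecs_def nth_line_through nth_add_scaled nth_powers_vec horner_point_on algebra_simps)

lemma line_through_eq_add_scaled: "line_through m p t = add_scaled (line_through m p 0) t (powers_vec m (p!0))"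
  by (intro nth_equalityI) (auto simp: nth_line_through nth_add_scaled nth_powers_vec algebra_simps)

lemma coeff_dot_add_scaled:
  assumes "length v = Suc m"
  shows "coeff_dot m P (add_scaled v t u) = coeff_dot m P v + t * coeff_dot m P u"
  using assms by (simp add: coeff_dot_def nth_add_scaled sum.distrib sum_distrib_left algebra_simps)

lemma coeff_dot_powers_vec:
  assumes "degree P \<le> m"
  shows "coeff_dot m P (powers_vec m s) = poly P s"
proof -
  have "poly P s = (\<Sum>i\<le>degree P. coeff P i * s^i)" by (simp add: poly_altdef)
  also have "\<dots> = (\<Sum>i\<le>m. coeff P i * s^i)"
    by (rule sum.mono_neutral_left) (use assms le_degree in auto)
  finally show ?thesis by (simp add: coeff_dot_def nth_powers_vec)
qed

lemma coeff_dot_horner_vec_point_on: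
  assumes "coeff A 0 = 0" "degree A \<le> m"
  shows "coeff_dot m A (horner_vec m (point_on m l s)) = l!0 * poly A s - coeff_dot m A l"
proof -
  have "coeff_dot m A (horner_vec m (point_on m l s)) = (\<Sum>i\<le>m. coeff A i * (l!0 * s^i - l!i))"
    unfolding coeff_dot_def
    by (rule sum.cong) (use assms(1) in \<open>auto simp: nth_horner_vec horner_point_on\<close>)
  also have "\<dots> = l!0 * (\<Sum>i\<le>m. coeff A i * s^i) - coeff_dot m A l"
    by (simp add: coeff_dot_def algebra_simps sum_subtractf sum_distrib_left)
  also have "(\<Sum>i\<le>m. coeff A i * s^i) = poly A s"
    using coeff_dot_powers_vec[OF assms(2), of s] by (simp add: coeff_dot_def nth_powers_vec)
  finally show ?thesis .
qed

lemma inj_line_through: "inj (line_through m p)"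
  by (metis injI hd_line_through)
lemma inj_point_on: "inj (point_on m l)"
  by (metis injI hd_point_on)

lemma incident_lines_eq_range:
  assumes "p \<in> vecs m"
  shows "{l \<in> vecs m. wenger_incident m p l} = range (line_through m p)"
proof (intro equalityI subsetI)
  fix l assume "l \<in> {l \<in> vecs m. wenger_incident m p l}"
  then have "l = line_through m p (l!0)" using incident_imp_eq_line_through by blast
  then show "l \<in> range (line_through m p)" by (metis rangeI)
next
  fix l assume "l \<in> range (line_through m p)"
  then obtain t where "l = line_through m p t" by auto
  then show "l \<in> {l \<in> vecs m. wenger_incident m p l}" using incident_line_through by (simp add: vecs_def)
qed

lemma incident_points_eq_range:
  assumes "l \<in> vecs m"
  shows "{p \<in> vecs m. wenger_incident m p l} = range (point_on m l)"
proof (intro equalityI subsetI)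
  fix p assume "p \<in> {p \<in> vecs m. wenger_incident m p l}"
  then have "p = point_on m l (p!0)" using incident_imp_eq_point_on by blast
  then show "p \<in> range (point_on m l)" by (metis rangeI)
next
  fix p assume "p \<in> range (point_on m l)"
  then obtain s where "p = point_on m l s" by auto
  then show "p \<in> {p \<in> vecs m. wenger_incident m p l}" using incident_point_on by (simp add: vecs_def)
qed

lemma sum_incident_lines:
  assumes "p \<in> vecs m"
  shows "(\<Sum>l\<in>{l \<in> vecs m. wenger_incident m p l}. F l)
       = (\<Sum>t\<in>(UNIV::'a::{field,finite} set). F (line_through m p t))"
  unfolding incident_lines_eq_range[OF assms] by (simp add: sum.reindex[OF inj_line_through])

lemma sum_incident_points:
  assumes "l \<in> vecs m"
  shows "(\<Sum>p\<in>{p \<in> vecs m. wenger_incident m p l}. F p)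
       = (\<Sum>s\<in>(UNIV::'a::{field,finite} set). F (point_on m l s))"
  unfolding incident_points_eq_range[OF assms] by (simp add: sum.reindex[OF inj_point_on])

lemma finite_vecs[simp]: "finite (vecs m :: 'a::finite list set)"
  unfolding vecs_def using finite_lists_length_eq[of "UNIV::'a set" "Suc m"] by simp

lemma card_vecs: "card (vecs m :: 'a::finite list set) = CARD('a) ^ Suc m"
  unfolding vecs_def using card_lists_length_eq[of "UNIV::'a set" "Suc m"] by simp

lemma sum_flags_swap:
  fixes G :: "'a::{field,finite} list \<Rightarrow> 'a list \<Rightarrow> 'b::comm_monoid_add"
  shows "(\<Sum>p\<in>vecs m. \<Sum>t\<in>UNIV. G p (line_through m p t))
       = (\<Sum>l\<in>vecs m. \<Sum>s\<in>UNIV. G (point_on m l s) l)"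
proof -
  have "(\<Sum>p\<in>vecs m. \<Sum>t\<in>UNIV. G p (line_through m p t))
      = (\<Sum>p\<in>vecs m. \<Sum>l\<in>{l \<in> vecs m. wenger_incident m p l}. G p l)"
    by (simp add: sum_incident_lines)
  also have "\<dots> = (\<Sum>p\<in>vecs m. \<Sum>l\<in>vecs m. if wenger_incident m p l then G p l else 0)"
    by (simp add: sum.inter_filter)
  also have "\<dots> = (\<Sum>l\<in>vecs m. \<Sum>p\<in>vecs m. if wenger_incident m p l then G p l else 0)"
    by (rule sum.swap)
  also have "\<dots> = (\<Sum>l\<in>vecs m. \<Sum>p\<in>{p \<in> vecs m. wenger_incident m p l}. G p l)"
    by (simp add: sum.inter_filter)
  also have "\<dots> = (\<Sum>l\<in>vecs m. \<Sum>s\<in>UNIV. G (point_on m l s) l)"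
    by (simp add: sum_incident_points)
  finally show ?thesis .
qed

lemma inj_on_horner_vec: "inj_on (horner_vec m) (vecs m)"
proof (rule inj_onI)
  fix p p' :: "'a list" assume p: "p \<in> vecs m" "p' \<in> vecs m" and eq: "horner_vec m p = horner_vec m p'"
  have h0: "p!0 = p'!0" using arg_cong[OF eq, of "\<lambda>v. v ! 0"] by (simp add: nth_horner_vec)
  have h: "horner p i = horner p' i" if "i \<le> m" for i
    using arg_cong[OF eq, of "\<lambda>v. v ! i"] that by (cases i) (simp_all add: nth_horner_vec)
  show "p = p'"
  proof (rule nth_equalityI)
    show "length p = length p'" using p by (simp add: vecs_def)
    fix i assume "i < length p"
    then have "i \<le> m" using p by (simp add: vecs_def)
    then show "p!i = p'!i" using h0 h[of i] h[of "i - 1"] by (cases i) simp_all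
  qed
qed

lemma bij_betw_horner_vec: "bij_betw (horner_vec m) (vecs m) (vecs m :: 'a::{field,finite} list set)"
proof -
  have "horner_vec m ` vecs m \<subseteq> vecs m" by (auto simp: vecs_def)
  then show ?thesis
    using endo_inj_surj[OF finite_vecs _ inj_on_horner_vec[of m]] inj_on_horner_vec[of m]
    unfolding bij_betw_def by blast
qed

section \<open>Orthogonal waves on a finite type\<close>

definition dft :: "nat \<Rightarrow> nat \<Rightarrow> nat \<Rightarrow> complex" where
  "dft n j t = cis (2 * pi * real j / real n) ^ t"

lemma cnj_dft_mult_self: "cnj (dft n j t) * dft n j t = 1"
proof -
  have "cnj (dft n j t) * dft n j t = of_real ((cmod (dft n j t))^2)"
    using complex_norm_square[of "dft n j t"] by (simp add: mult.commute)
  also have "cmod (dft n j t) = 1" by (simp add: dft_def norm_power)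
  finally show ?thesis by simp
qed

lemma dft_orthogonal:
  assumes n: "0 < n" and j: "j < n" and j': "j' < n"
  shows "(\<Sum>t<n. cnj (dft n j t) * dft n j' t) = (if j = j' then of_nat n else 0)"
proof -
  define w where "w = (\<lambda>k. cis (2 * pi * real k / real n))"
  have bij: "bij_betw w {..<n} {z. z ^ n = 1}" using bij_betw_roots_unity[OF n] by (simp add: w_def)
  define z where "z = cnj (w j) * w j'"
  have tm: "cnj (dft n j t) * dft n j' t = z ^ t" for t
    by (simp add: dft_def z_def w_def power_mult_distrib)
  have zdiv: "z = w j' / w j"
    by (simp add: z_def w_def cis_cnj cis_mult cis_divide algebra_simps)
  have wnz: "w j \<noteq> 0" by (simp add: w_def)
  show ?thesis
  proof (cases "j = j'")
    case True
    then have "z = 1" using zdiv wnz by simp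
    then show ?thesis using True by (simp add: cnj_dft_mult_self)
  next
    case False
    have "w j \<noteq> w j'" using bij False j j' unfolding bij_betw_def inj_on_def by blast
    then have z1: "z \<noteq> 1" using zdiv wnz by auto
    have "w j ^ n = 1" "w j' ^ n = 1" using bij j j' unfolding bij_betw_def by auto
    then have "z ^ n = 1" by (simp add: zdiv power_divide)
    then show ?thesis using False z1 by (simp add: tm sum_gp_strict)
  qed
qed

lemma sum_dft_eq_0:
  assumes "0 < j" "j < n"
  shows "(\<Sum>t<n. dft n j t) = 0"
  using dft_orthogonal[of n 0 j] assms by (simp add: dft_def)

definition enum_index :: "'x set \<Rightarrow> 'x \<Rightarrow> nat" where
  "enum_index X = (SOME f. bij_betw f X {0..<card X})"

lemma bij_betw_enum_index: "finite X \<Longrightarrow> bij_betw (enum_index X) X {..<card X}"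
  unfolding enum_index_def using someI_ex[OF ex_bij_betw_finite_nat] by (simp add: atLeast0LessThan)

lemma sum_enum_index:
  assumes "finite X"
  shows "(\<Sum>x\<in>X. g (enum_index X x)) = (\<Sum>t<card X. g t)"
  using sum.reindex_bij_betw[OF bij_betw_enum_index[OF assms], of g] by simp

text \<open>
  The paper uses an additive character \<open>\<psi>\<close> of \<open>\<F>\<^sub>q\<close>. All that is needed, however, is a family
  \<open>wave x\<close> (\<open>x \<in> \<F>\<^sub>q\<close>) of pairwise orthogonal unimodular functions on \<open>\<F>\<^sub>q\<close> with \<open>wave 0 = 1\<close>:
  the discrete Fourier basis transported along an arbitrary enumeration of the type, with
  \<open>wave_index\<close> swapping the frequencies of \<open>0\<close> and of the element enumerated first.
  In general \<open>wave x\<close> is not a character.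
\<close>
definition wave_index :: "'a::{zero,finite} \<Rightarrow> nat" where
  "wave_index x = (let f = enum_index (UNIV::'a set) in
     if f x = f 0 then 0 else if f x = 0 then f 0 else f x)"

lemma wave_index_props:
  fixes x y :: "'a::{zero,finite}"
  shows "wave_index x < CARD('a)" "wave_index x = 0 \<longleftrightarrow> x = 0"
    "wave_index x = wave_index y \<longleftrightarrow> x = y"
proof -
  let ?f = "enum_index (UNIV::'a set)"
  have b: "bij_betw ?f UNIV {..<CARD('a)}" by (rule bij_betw_enum_index) simp
  have inj: "?f a = ?f b \<longleftrightarrow> a = b" for a b using b unfolding bij_betw_def inj_on_def by blast
  have lt: "?f a < CARD('a)" for a using b unfolding bij_betw_def by auto
  show "wave_index x < CARD('a)" using lt[of x] lt[of 0] by (auto simp: wave_index_def Let_def)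
  show "wave_index x = 0 \<longleftrightarrow> x = 0" using inj[of x 0] by (auto simp: wave_index_def Let_def)
  show "wave_index x = wave_index y \<longleftrightarrow> x = y"
    using inj[of x y] inj[of x 0] inj[of y 0] inj[of 0 x] inj[of 0 y]
    by (auto simp: wave_index_def Let_def split: if_splits)
qed

definition wave :: "'a::{zero,finite} \<Rightarrow> 'a \<Rightarrow> complex" where
  "wave x s = dft CARD('a) (wave_index x) (enum_index (UNIV::'a set) s)"

lemma wave_0[simp]: "wave 0 s = 1"
  using wave_index_props(2)[of "0::'a"] by (simp add: wave_def dft_def)

lemma cnj_wave_mult_self: "cnj (wave x s) * wave x s = 1"
  by (simp add: wave_def cnj_dft_mult_self)

lemma wave_orthogonal:
  fixes x y :: "'a::{zero,finite}"
  shows "(\<Sum>s\<in>UNIV. cnj (wave x s) * wave y s) = (if x = y then of_nat CARD('a) else 0)"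
proof -
  let ?q = "CARD('a)"
  have "(\<Sum>s\<in>UNIV. cnj (wave x s) * wave y s)
      = (\<Sum>t<?q. cnj (dft ?q (wave_index x) t) * dft ?q (wave_index y) t)"
    unfolding wave_def by (rule sum_enum_index) simp
  also have "\<dots> = (if x = y then of_nat ?q else 0)"
    using dft_orthogonal[OF _ wave_index_props(1) wave_index_props(1), of x y]
      wave_index_props(3)[of x y] finite_UNIV_card_ge_0[where 'a='a]
    by simp
  finally show ?thesis .
qed

lemma sum_wave_eq_0:
  fixes x :: "'a::{zero,finite}"
  assumes "x \<noteq> 0"
  shows "(\<Sum>s\<in>UNIV. wave x s) = 0"
  using wave_orthogonal[of 0 x] assms by simp

lemma sum_affine_reindex:
  fixes g :: "'a::{field,finite} \<Rightarrow> 'b::comm_monoid_add"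
  assumes "a \<noteq> 0"
  shows "(\<Sum>t\<in>UNIV. g (a * t + b)) = (\<Sum>s\<in>UNIV. g s)"
proof -
  have inj: "inj (\<lambda>t. a * t + b)" using assms by (intro injI) simp
  then have "range (\<lambda>t. a * t + b) = UNIV" by (simp add: finite_UNIV_inj_surj)
  then show ?thesis using sum.reindex[OF inj, of g] by (simp add: comp_def)
qed

section \<open>Line waves\<close>

text \<open>
  \<open>line_wave m P\<close> plays the role of \<open>l \<mapsto> \<psi>(\<langle>P, l\<rangle>)\<close>. Dividing by the leading coefficient
  makes the waves of \<open>P\<close> and of \<open>a \<cdot> P\<close> read the same argument through different members
  of the orthogonal family, which replaces the orthogonality of \<open>\<psi>(a x)\<close> and \<open>\<psi>(x)\<close>.
\<close>
definition poly_wave :: "'a::{field,finite} poly \<Rightarrow> 'a \<Rightarrow> complex" where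
  "poly_wave P b = wave (lead_coeff P) (b / lead_coeff P)"

definition line_wave :: "nat \<Rightarrow> 'a::{field,finite} poly \<Rightarrow> 'a list \<Rightarrow> complex" where
  "line_wave m P v = poly_wave P (coeff_dot m P v)"

lemma poly_wave_smult: "poly_wave (Polynomial.smult a P) (a * b) = wave (a * lead_coeff P) (b / lead_coeff P)"
  by (cases "a = 0") (simp_all add: poly_wave_def)

lemma cnj_line_wave_mult_self: "cnj (line_wave m P v) * line_wave m P v = 1"
  by (simp add: line_wave_def poly_wave_def cnj_wave_mult_self)

lemma sum_poly_wave_arith_progression:
  assumes "P \<noteq> 0" "c \<noteq> 0"
  shows "(\<Sum>t\<in>UNIV. poly_wave P (b + t * c)) = 0"
proof -
  let ?l = "lead_coeff P"
  have l: "?l \<noteq> 0" using assms by simp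
  have "(\<Sum>t\<in>UNIV. poly_wave P (b + t * c)) = (\<Sum>t\<in>UNIV. wave ?l ((c / ?l) * t + b / ?l))"
    by (simp add: poly_wave_def add_divide_distrib algebra_simps)
  also have "\<dots> = (\<Sum>s\<in>UNIV. wave ?l s)" by (rule sum_affine_reindex) (use assms l in simp)
  also have "\<dots> = 0" by (rule sum_wave_eq_0[OF l])
  finally show ?thesis .
qed

lemma bij_betw_add_scaled:
  assumes "u \<in> vecs m"
  shows "bij_betw (\<lambda>v. add_scaled v t u) (vecs m) (vecs m :: 'a::{field,finite} list set)"
proof -
  have inj: "inj_on (\<lambda>v. add_scaled v t u) (vecs m)"
  proof (rule inj_onI)
    fix v v' :: "'a list" assume v: "v \<in> vecs m" "v' \<in> vecs m" and eq: "add_scaled v t u = add_scaled v' t u"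
    show "v = v'"
    proof (rule nth_equalityI)
      show "length v = length v'" using v by (simp add: vecs_def)
      fix i assume "i < length v"
      then show "v!i = v'!i" using v arg_cong[OF eq, of "\<lambda>w. w ! i"] by (simp add: vecs_def nth_add_scaled)
    qed
  qed
  have "(\<lambda>v. add_scaled v t u) ` vecs m \<subseteq> vecs m" by (auto simp: vecs_def)
  then show ?thesis using endo_inj_surj[OF finite_vecs _ inj] inj by (simp add: bij_betw_def)
qed

lemma sum_eq_0_by_translation:
  fixes F :: "'a::{field,finite} list \<Rightarrow> complex"
  assumes u: "u \<in> vecs m" and z: "\<And>v. v \<in> vecs m \<Longrightarrow> (\<Sum>t\<in>UNIV. F (add_scaled v t u)) = 0"
  shows "(\<Sum>v\<in>vecs m. F v) = 0"
proof -
  have e: "(\<Sum>v\<in>vecs m. F v) = (\<Sum>v\<in>vecs m. F (add_scaled v t u))" for t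
    using sum.reindex_bij_betw[OF bij_betw_add_scaled[OF u, of t], of F] by simp
  have "of_nat CARD('a) * (\<Sum>v\<in>vecs m. F v) = (\<Sum>t\<in>(UNIV::'a set). \<Sum>v\<in>vecs m. F v)"
    by simp
  also have "\<dots> = (\<Sum>t\<in>(UNIV::'a set). \<Sum>v\<in>vecs m. F (add_scaled v t u))" using e by simp
  also have "\<dots> = (\<Sum>v\<in>vecs m. \<Sum>t\<in>UNIV. F (add_scaled v t u))" by (rule sum.swap)
  also have "\<dots> = 0" using z by simp
  finally show ?thesis by simp
qed

definition vec_of :: "nat \<Rightarrow> (nat \<Rightarrow> 'a) \<Rightarrow> 'a list" where
  "vec_of m f = map f [0..<Suc m]"

lemma vec_of_in_vecs[simp]: "vec_of m f \<in> vecs m" by (simp add: vec_of_def vecs_def)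
lemma nth_vec_of: "i \<le> m \<Longrightarrow> vec_of m f ! i = f i" by (simp add: vec_of_def del: upt_Suc)

lemma coeff_dot_vec_of: "coeff_dot m P (vec_of m f) = (\<Sum>i\<le>m. coeff P i * f i)"
  by (simp add: coeff_dot_def nth_vec_of)

lemma coeff_dot_unit_vec:
  assumes "d \<le> m"
  shows "coeff_dot m P (vec_of m (\<lambda>i. if i = d then 1 else 0)) = coeff P d"
  using assms by (simp add: coeff_dot_vec_of if_distrib[of "(*) _"] sum.delta cong: if_cong)

lemma coeff_dot_two_entry_vec:
  assumes "i \<le> m" "j \<le> m" "i \<noteq> j"
  shows "coeff_dot m P (vec_of m (\<lambda>k. if k = i then a else if k = j then b else 0))
       = coeff P i * a + coeff P j * b"
proof -
  have "(\<Sum>k\<le>m. coeff P k * (if k = i then a else if k = j then b else 0))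
      = (\<Sum>k\<le>m. (if k = i then coeff P i * a else 0) + (if k = j then coeff P j * b else 0))"
    by (rule sum.cong) (use assms in auto)
  also have "\<dots> = coeff P i * a + coeff P j * b" using assms by (simp add: sum.distrib)
  finally show ?thesis by (simp add: coeff_dot_vec_of)
qed

lemma coeff_dot_smult: "coeff_dot m (Polynomial.smult a P) v = a * coeff_dot m P v"
  by (simp add: coeff_dot_def sum_distrib_left algebra_simps)

lemma exists_nonzero_minor:
  fixes P P' :: "'a::field poly"
  assumes "P \<noteq> 0" "degree P \<le> m" "degree P' \<le> m" "\<not> (\<exists>a. P' = Polynomial.smult a P)"
  shows "\<exists>i\<le>m. \<exists>j\<le>m. coeff P i * coeff P' j \<noteq> coeff P j * coeff P' i"
proof (rule ccontr)
  assume "\<not> ?thesis"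
  then have minors: "\<And>i j. i \<le> m \<Longrightarrow> j \<le> m \<Longrightarrow> coeff P i * coeff P' j = coeff P j * coeff P' i"
    by blast
  define d where "d = degree P"
  have l: "coeff P d \<noteq> 0" using assms(1) by (simp add: d_def)
  have "P' = Polynomial.smult (coeff P' d / coeff P d) P"
  proof (rule poly_eqI)
    fix i
    show "coeff P' i = coeff (Polynomial.smult (coeff P' d / coeff P d) P) i"
    proof (cases "i \<le> m")
      case True
      have "coeff P i * coeff P' d = coeff P d * coeff P' i" using minors[OF True] assms(2) d_def by simp
      then show ?thesis using l by (simp add: field_simps)
    next
      case False
      then have "coeff P i = 0" "coeff P' i = 0" using assms(2,3) by (auto intro: coeff_eq_0)
      then show ?thesis by simp
    qed
  qed
  then show False using assms(4) by blast
qed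

lemma sum_vecs_hd:
  fixes W :: "'a::finite \<Rightarrow> 'b::comm_semiring_1"
  shows "(\<Sum>v\<in>vecs m. W (v!0)) = of_nat (CARD('a) ^ m) * (\<Sum>x\<in>UNIV. W x)"
proof -
  let ?R = "{r :: 'a list. length r = m}"
  have cR: "card ?R = CARD('a) ^ m" using card_lists_length_eq[of "UNIV::'a set" m] by simp
  have inj: "inj_on (\<lambda>(x, r). x # r) (UNIV \<times> ?R)" by (auto simp: inj_on_def)
  have img: "(\<lambda>(x, r). x # r) ` (UNIV \<times> ?R) = vecs m"
  proof (intro equalityI subsetI)
    fix v :: "'a list" assume "v \<in> vecs m"
    then obtain x r where "v = x # r" "length r = m" by (cases v) (auto simp: vecs_def)
    then show "v \<in> (\<lambda>(x, r). x # r) ` (UNIV \<times> ?R)" by auto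
  qed (auto simp: vecs_def)
  have "(\<Sum>v\<in>vecs m. W (v!0)) = (\<Sum>(x, r)\<in>UNIV \<times> ?R. W x)"
    using sum.reindex[OF inj, of "\<lambda>v. W (v!0)"] img by (simp add: case_prod_beta comp_def)
  also have "\<dots> = (\<Sum>x\<in>UNIV. \<Sum>r\<in>?R. W x)" by (rule sum.cartesian_product[symmetric])
  also have "\<dots> = of_nat (CARD('a) ^ m) * (\<Sum>x\<in>UNIV. W x)" by (simp add: cR sum_distrib_left)
  finally show ?thesis .
qed

lemma line_wave_weighted_sqnorm:
  fixes W :: "'a::{field,finite} \<Rightarrow> complex"
  shows "(\<Sum>v\<in>vecs m. W (v!0) * (cnj (line_wave m P v) * line_wave m P v))
       = of_nat (CARD('a) ^ m) * (\<Sum>x\<in>UNIV. W x)"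
  using sum_vecs_hd[of W m] by (simp add: cnj_line_wave_mult_self)

lemma sum_line_waves_along_proportional:
  fixes P :: "'a::{field,finite} poly"
  assumes "P \<noteq> 0" "a \<noteq> 1" and v: "v \<in> vecs m" and u: "coeff_dot m P u = lead_coeff P"
  shows "(\<Sum>t\<in>UNIV. cnj (line_wave m P (add_scaled v t u)) * line_wave m (Polynomial.smult a P) (add_scaled v t u))
       = 0"
proof -
  let ?l = "lead_coeff P" and ?c = "coeff_dot m P v / lead_coeff P"
  have l: "?l \<noteq> 0" using assms by simp
  have arg: "coeff_dot m P (add_scaled v t u) / ?l = 1 * t + ?c" for t
    using coeff_dot_add_scaled[of v m P t u] v u l by (simp add: vecs_def field_simps)
  have lw: "line_wave m P w = wave ?l (coeff_dot m P w / ?l)" for w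
    by (simp add: line_wave_def poly_wave_def)
  have lw': "line_wave m (Polynomial.smult a P) w = wave (a * ?l) (coeff_dot m P w / ?l)" for w
    by (simp only: line_wave_def coeff_dot_smult poly_wave_smult)
  have "(\<Sum>t\<in>UNIV. cnj (line_wave m P (add_scaled v t u)) * line_wave m (Polynomial.smult a P) (add_scaled v t u))
      = (\<Sum>t\<in>UNIV. cnj (wave ?l (1 * t + ?c)) * wave (a * ?l) (1 * t + ?c))"
    by (simp only: lw lw' arg)
  also have "\<dots> = (\<Sum>s\<in>UNIV. cnj (wave ?l s) * wave (a * ?l) s)"
    by (rule sum_affine_reindex) simp
  also have "\<dots> = 0" using wave_orthogonal[of ?l "a * ?l"] l assms(2) by simp
  finally show ?thesis .
qed

lemma sum_line_waves_along_kernel: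
  fixes P P' :: "'a::{field,finite} poly"
  assumes v: "v \<in> vecs m" and "coeff_dot m P u = 0" "coeff_dot m P' u \<noteq> 0"
  shows "(\<Sum>t\<in>UNIV. cnj (line_wave m P (add_scaled v t u)) * line_wave m P' (add_scaled v t u)) = 0"
proof -
  have "P' \<noteq> 0" using assms(3) by (auto simp: coeff_dot_def)
  have "(\<Sum>t\<in>UNIV. cnj (line_wave m P (add_scaled v t u)) * line_wave m P' (add_scaled v t u))
      = cnj (line_wave m P v) * (\<Sum>t\<in>UNIV. poly_wave P' (coeff_dot m P' v + t * coeff_dot m P' u))"
    using v assms(2) by (simp add: line_wave_def coeff_dot_add_scaled vecs_def sum_distrib_left)
  also have "\<dots> = 0" using sum_poly_wave_arith_progression[OF \<open>P' \<noteq> 0\<close> assms(3)] by simp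
  finally show ?thesis .
qed

text \<open>
  Two distinct line waves become orthogonal already on every affine line of lines in a
  suitable direction \<open>u\<close>; the direction avoids the first coordinate when both polynomials
  have zero constant term.
\<close>
lemma exists_orthogonalising_direction:
  fixes P P' :: "'a::{field,finite} poly"
  assumes dP: "degree P \<le> m" and dP': "degree P' \<le> m" and ne: "P \<noteq> P'"
  obtains u where "u \<in> vecs m" "coeff P 0 = 0 \<Longrightarrow> coeff P' 0 = 0 \<Longrightarrow> u ! 0 = 0"
    "\<And>v. v \<in> vecs m \<Longrightarrow>
       (\<Sum>t\<in>UNIV. cnj (line_wave m P (add_scaled v t u)) * line_wave m P' (add_scaled v t u)) = 0"
proof -
  have unit_dir: "\<exists>u\<in>vecs m. coeff_dot m Q u = lead_coeff Q \<and> (coeff Q 0 = 0 \<longrightarrow> u ! 0 = 0)"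
    if "Q \<noteq> 0" "degree Q \<le> m" for Q :: "'a poly"
  proof -
    let ?u = "vec_of m (\<lambda>i. if i = degree Q then 1 else 0)"
    have "?u ! 0 = 0" if "coeff Q 0 = 0"
    proof -
      have "degree Q \<noteq> 0" using that \<open>Q \<noteq> 0\<close> by (metis leading_coeff_0_iff)
      then show ?thesis by (simp add: nth_vec_of)
    qed
    then show ?thesis using coeff_dot_unit_vec[OF \<open>degree Q \<le> m\<close>] by (intro bexI[of _ ?u]) auto
  qed
  consider (multiple) a where "P \<noteq> 0" "P' = Polynomial.smult a P" | (multiple') a where "P' \<noteq> 0" "P = Polynomial.smult a P'"
    | (independent) "P \<noteq> 0" "P' \<noteq> 0" "\<not> (\<exists>a. P' = Polynomial.smult a P)"
    using ne by (metis smult_0_left)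
  then show thesis
  proof cases
    case multiple
    obtain u where u: "u \<in> vecs m" "coeff_dot m P u = lead_coeff P" "coeff P 0 = 0 \<longrightarrow> u ! 0 = 0"
      using unit_dir[OF multiple(1) dP] by blast
    have "a \<noteq> 1" using multiple ne by auto
    show thesis
      by (rule that[OF u(1)]) (use u multiple sum_line_waves_along_proportional[OF multiple(1) \<open>a \<noteq> 1\<close>] in auto)
  next
    case multiple'
    obtain u where u: "u \<in> vecs m" "coeff_dot m P' u = lead_coeff P'" "coeff P' 0 = 0 \<longrightarrow> u ! 0 = 0"
      using unit_dir[OF multiple'(1) dP'] by blast
    have "a \<noteq> 1" using multiple' ne by auto
    have swap: "(\<Sum>t\<in>UNIV. cnj (f t) * g t)
        = cnj (\<Sum>t\<in>UNIV. cnj (g t) * f t)" for f g :: "'a \<Rightarrow> complex"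
      by (simp add: mult.commute)
    show thesis
    proof (rule that[OF u(1)])
      show "u ! 0 = 0" if "coeff P 0 = 0" "coeff P' 0 = 0" using u(3) that(2) by simp
      fix v :: "'a list" assume "v \<in> vecs m"
      then have "(\<Sum>t\<in>UNIV. cnj (line_wave m P' (add_scaled v t u)) * line_wave m P (add_scaled v t u))
          = 0"
        using sum_line_waves_along_proportional[OF multiple'(1) \<open>a \<noteq> 1\<close> _ u(2)] multiple'(2) by simp
      then show "(\<Sum>t\<in>UNIV. cnj (line_wave m P (add_scaled v t u)) * line_wave m P' (add_scaled v t u))
          = 0"
        by (subst swap) (simp only: complex_cnj_zero)
    qed
  next
    case independent
    obtain i j where ij: "i \<le> m" "j \<le> m" "coeff P i * coeff P' j \<noteq> coeff P j * coeff P' i"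
      using exists_nonzero_minor[OF independent(1) dP dP' independent(3)] by blast
    then have "i \<noteq> j" by auto
    define u where "u = vec_of m (\<lambda>k. if k = i then coeff P j else if k = j then - coeff P i else 0)"
    have uP: "coeff_dot m P u = 0"
      using coeff_dot_two_entry_vec[OF ij(1,2) \<open>i \<noteq> j\<close>, of P "coeff P j" "- coeff P i"]
      by (simp add: u_def algebra_simps)
    have uP': "coeff_dot m P' u \<noteq> 0"
      using coeff_dot_two_entry_vec[OF ij(1,2) \<open>i \<noteq> j\<close>, of P' "coeff P j" "- coeff P i"] ij(3)
      by (auto simp: u_def algebra_simps)
    show thesis
    proof (rule that[of u])
      show "u \<in> vecs m" by (simp add: u_def)
      show "u ! 0 = 0" if "coeff P 0 = 0" "coeff P' 0 = 0"
      proof -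
        have "i \<noteq> 0" "j \<noteq> 0" using ij(3) that by (auto intro: gr0I)
        then show ?thesis by (simp add: u_def nth_vec_of)
      qed
    qed (rule sum_line_waves_along_kernel[OF _ uP uP'])
  qed
qed

lemma line_wave_weighted_orthogonal:
  fixes P P' :: "'a::{field,finite} poly" and W :: "'a \<Rightarrow> complex"
  assumes "degree P \<le> m" "degree P' \<le> m" "P \<noteq> P'"
    and W: "(coeff P 0 = 0 \<and> coeff P' 0 = 0) \<or> (\<forall>x. W x = 1)"
  shows "(\<Sum>v\<in>vecs m. W (v!0) * (cnj (line_wave m P v) * line_wave m P' v)) = 0"
proof -
  obtain u where u: "u \<in> vecs m" "coeff P 0 = 0 \<Longrightarrow> coeff P' 0 = 0 \<Longrightarrow> u ! 0 = 0"
    and along: "\<And>v. v \<in> vecs m \<Longrightarrow>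
       (\<Sum>t\<in>UNIV. cnj (line_wave m P (add_scaled v t u)) * line_wave m P' (add_scaled v t u)) = 0"
    using exists_orthogonalising_direction[OF assms(1-3)] by blast
  have W_shift: "W (add_scaled v t u ! 0) = W (v!0)" if "v \<in> vecs m" for v t
    using that W u(2) by (auto simp: vecs_def nth_add_scaled)
  show ?thesis
  proof (rule sum_eq_0_by_translation[OF u(1)])
    fix v :: "'a list" assume v: "v \<in> vecs m"
    show "(\<Sum>t\<in>UNIV. W (add_scaled v t u ! 0)
        * (cnj (line_wave m P (add_scaled v t u)) * line_wave m P' (add_scaled v t u))) = 0"
      using along[OF v] by (simp add: W_shift[OF v] flip: sum_distrib_left)
  qed
qed

section \<open>Eigenvectors of the adjacency operator\<close>

definition num_roots :: "'a::{field,finite} poly \<Rightarrow> nat" where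
  "num_roots P = card {s. poly P s = 0}"

definition point_wave :: "nat \<Rightarrow> 'a::{field,finite} poly \<Rightarrow> 'a list \<Rightarrow> complex" where
  "point_wave m P p = (\<Sum>t\<in>UNIV. line_wave m P (line_through m p t))"

lemma sum_roots_indicator:
  fixes X :: complex and P :: "'a::{field,finite} poly"
  shows "(\<Sum>s\<in>UNIV. if poly P s = 0 then X else 0) = of_nat (num_roots P) * X"
proof -
  have "(\<Sum>s\<in>UNIV. if poly P s = 0 then X else 0) = (\<Sum>s\<in>{s. poly P s = 0}. X)"
    by (simp add: sum.If_cases Int_def)
  then show ?thesis by (simp add: num_roots_def)
qed

lemma sum_point_wave_point_on:
  fixes P :: "'a::{field,finite} poly"
  assumes l: "l \<in> vecs m" and dP: "degree P \<le> m"
  shows "(\<Sum>s\<in>UNIV. point_wave m P (point_on m l s)) = of_nat (CARD('a) * num_roots P) * line_wave m P l"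
proof -
  have ll: "length l = Suc m" using l by (simp add: vecs_def)
  have inner: "point_wave m P (point_on m l s)
      = (if poly P s = 0 then of_nat CARD('a) * line_wave m P l else 0)" for s
  proof -
    have e: "line_wave m P (line_through m (point_on m l s) t)
        = poly_wave P (coeff_dot m P l + (1 * t + - (l!0)) * poly P s)" for t
      unfolding line_wave_def line_through_point_on[OF l] coeff_dot_add_scaled[OF ll] coeff_dot_powers_vec[OF dP] by simp
    show ?thesis
    proof (cases "poly P s = 0")
      case True
      have "point_wave m P (point_on m l s)
          = (\<Sum>t\<in>(UNIV::'a set). poly_wave P (coeff_dot m P l))"
        using True by (simp add: point_wave_def e)
      then show ?thesis using True by (simp add: line_wave_def)
    next
      case False
      then have P0: "P \<noteq> 0" by auto
      have "point_wave m P (point_on m l s)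
          = (\<Sum>t\<in>UNIV. poly_wave P (coeff_dot m P l + (1 * t + - (l!0)) * poly P s))"
        by (simp add: point_wave_def e)
      also have "\<dots> = (\<Sum>t\<in>UNIV. poly_wave P (coeff_dot m P l + t * poly P s))"
        by (rule sum_affine_reindex[of 1 "\<lambda>t. poly_wave P (coeff_dot m P l + t * poly P s)"]) simp
      also have "\<dots> = 0" by (rule sum_poly_wave_arith_progression[OF P0 False])
      finally show ?thesis using False by simp
    qed
  qed
  show ?thesis unfolding inner sum_roots_indicator by simp
qed

lemma point_wave_eq_0:
  fixes P :: "'a::{field,finite} poly"
  assumes p: "p \<in> vecs m" and dP: "degree P \<le> m" and nz: "poly P (p!0) \<noteq> 0"
  shows "point_wave m P p = 0"
proof -
  have ll: "length (line_through m p 0) = Suc m" by simp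
  have P0: "P \<noteq> 0" using nz by auto
  have "point_wave m P p = (\<Sum>t\<in>UNIV. poly_wave P (coeff_dot m P (line_through m p 0) + t * poly P (p!0)))"
    unfolding point_wave_def line_wave_def
    by (subst line_through_eq_add_scaled) (simp add: coeff_dot_add_scaled[OF ll] coeff_dot_powers_vec[OF dP])
  also have "\<dots> = 0" by (rule sum_poly_wave_arith_progression[OF P0 nz])
  finally show ?thesis .
qed

lemma point_wave_adjoint:
  fixes P :: "'a::{field,finite} poly" and G :: "'a list \<Rightarrow> complex"
  shows "(\<Sum>p\<in>vecs m. cnj (point_wave m P p) * G p)
       = (\<Sum>l\<in>vecs m. cnj (line_wave m P l) * (\<Sum>s\<in>UNIV. G (point_on m l s)))"
proof -
  have "(\<Sum>p\<in>vecs m. cnj (point_wave m P p) * G p)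
      = (\<Sum>p\<in>vecs m. \<Sum>t\<in>UNIV. cnj (line_wave m P (line_through m p t)) * G p)"
    by (simp add: point_wave_def sum_distrib_right)
  also have "\<dots> = (\<Sum>l\<in>vecs m. \<Sum>s\<in>UNIV. cnj (line_wave m P l) * G (point_on m l s))"
    by (rule sum_flags_swap[of "\<lambda>p l. cnj (line_wave m P l) * G p"])
  also have "\<dots> = (\<Sum>l\<in>vecs m. cnj (line_wave m P l) * (\<Sum>s\<in>UNIV. G (point_on m l s)))"
    by (simp add: sum_distrib_left)
  finally show ?thesis .
qed

definition fibre :: "'a::{field,finite} poly \<Rightarrow> 'a \<Rightarrow> 'a set" where
  "fibre A c = {s. poly A s = c}"

definition fibre_wave :: "'a::{field,finite} poly \<Rightarrow> 'a \<Rightarrow> nat \<Rightarrow> 'a \<Rightarrow> complex" where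
  "fibre_wave A c j x = (if poly A x = c then dft (card (fibre A c)) j (enum_index (fibre A c) x) else 0)"

text \<open>
  Summed over the points of a line \<open>l\<close>, a function of \<open>horner_vec m p\<close> only sees
  \<open>l\<^sub>0 A(s) - \<langle>A, l\<rangle>\<close> (\<open>coeff_dot_horner_vec_point_on\<close>), i.e. the value of \<open>A\<close> at the first
  coordinate \<open>s\<close>; a nonconstant Fourier mode on a fibre of \<open>A\<close> therefore sums to zero.
\<close>
definition point_fibre_wave :: "nat \<Rightarrow> 'a::{field,finite} poly \<Rightarrow> 'a \<Rightarrow> nat \<Rightarrow> 'a list \<Rightarrow> complex" where
  "point_fibre_wave m A c j p = fibre_wave A c j (p!0) * line_wave m A (horner_vec m p)"

lemma sum_if_fibre:
  fixes f :: "'a::{field,finite} \<Rightarrow> complex"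
  shows "(\<Sum>x\<in>UNIV. if poly A x = c then f x else 0) = (\<Sum>x\<in>fibre A c. f x)"
  unfolding fibre_def by (simp add: sum.If_cases Int_def)

lemma hd_horner_vec[simp]: "horner_vec m p ! 0 = p ! 0" by (simp add: nth_horner_vec)

lemma sum_fibre_wave:
  fixes X :: "'a::{field,finite} \<Rightarrow> complex"
  shows "(\<Sum>x\<in>UNIV. fibre_wave A c j x * X (poly A x))
       = X c * (\<Sum>t<card (fibre A c). dft (card (fibre A c)) j t)"
proof -
  let ?n = "card (fibre A c)" and ?e = "enum_index (fibre A c)"
  have "(\<Sum>x\<in>UNIV. fibre_wave A c j x * X (poly A x))
      = (\<Sum>x\<in>UNIV. if poly A x = c then X c * dft ?n j (?e x) else 0)"
    by (intro sum.cong) (simp_all add: fibre_wave_def)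
  also have "\<dots> = X c * (\<Sum>x\<in>fibre A c. dft ?n j (?e x))"
    by (simp add: sum_if_fibre sum_distrib_left)
  also have "(\<Sum>x\<in>fibre A c. dft ?n j (?e x)) = (\<Sum>t<?n. dft ?n j t)"
    by (rule sum_enum_index) simp
  finally show ?thesis .
qed

lemma sum_point_fibre_wave_point_on:
  fixes A :: "'a::{field,finite} poly"
  assumes l: "l \<in> vecs m" and dA: "degree A \<le> m" and A0: "coeff A 0 = 0"
    and j: "0 < j" "j < card (fibre A c)"
  shows "(\<Sum>s\<in>UNIV. point_fibre_wave m A c j (point_on m l s)) = 0"
proof -
  have "(\<Sum>s\<in>UNIV. point_fibre_wave m A c j (point_on m l s))
      = (\<Sum>s\<in>UNIV. fibre_wave A c j s * (\<lambda>y. poly_wave A (l!0 * y - coeff_dot m A l)) (poly A s))"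
    by (simp add: point_fibre_wave_def line_wave_def coeff_dot_horner_vec_point_on[OF A0 dA])
  also have "\<dots>
      = poly_wave A (l!0 * c - coeff_dot m A l) * (\<Sum>t<card (fibre A c). dft (card (fibre A c)) j t)"
    by (rule sum_fibre_wave)
  also have "\<dots> = 0" using sum_dft_eq_0[OF j] by simp
  finally show ?thesis .
qed

lemma fibre_wave_orthogonal:
  fixes A :: "'a::{field,finite} poly"
  assumes "j < card (fibre A c)" "j' < card (fibre A c')"
  shows "(\<Sum>x\<in>UNIV. cnj (fibre_wave A c j x) * fibre_wave A c' j' x)
       = (if c = c' \<and> j = j' then of_nat (card (fibre A c)) else 0)"
proof (cases "c = c'")
  case True
  let ?n = "card (fibre A c)" and ?e = "enum_index (fibre A c)"
  have "(\<Sum>x\<in>UNIV. cnj (fibre_wave A c j x) * fibre_wave A c' j' x)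
      = (\<Sum>x\<in>UNIV. if poly A x = c then cnj (dft ?n j (?e x)) * dft ?n j' (?e x) else 0)"
    using True by (intro sum.cong) (simp_all add: fibre_wave_def)
  also have "\<dots> = (\<Sum>x\<in>fibre A c. cnj (dft ?n j (?e x)) * dft ?n j' (?e x))"
    by (rule sum_if_fibre)
  also have "\<dots> = (\<Sum>t<?n. cnj (dft ?n j t) * dft ?n j' t)"
    by (rule sum_enum_index) simp
  also have "\<dots> = (if j = j' then of_nat ?n else 0)"
    using assms True by (intro dft_orthogonal) auto
  finally show ?thesis using True by simp
next
  case False
  then have "cnj (fibre_wave A c j x) * fibre_wave A c' j' x = 0" for x
    by (simp add: fibre_wave_def)
  then show ?thesis using False by (simp only: sum.neutral_const) simp
qed

lemma point_fibre_wave_orthogonal: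
  fixes A A' :: "'a::{field,finite} poly"
  assumes dA: "degree A \<le> m" and A0: "coeff A 0 = 0" and dA': "degree A' \<le> m" and A0': "coeff A' 0 = 0"
    and j: "j < card (fibre A c)" and j': "j' < card (fibre A' c')"
  shows "(\<Sum>p\<in>vecs m. cnj (point_fibre_wave m A c j p) * point_fibre_wave m A' c' j' p)
       = (if A = A' \<and> c = c' \<and> j = j' then of_nat (CARD('a) ^ m * card (fibre A c)) else 0)"
proof -
  define W where "W x = cnj (fibre_wave A c j x) * fibre_wave A' c' j' x" for x
  have "(\<Sum>p\<in>vecs m. cnj (point_fibre_wave m A c j p) * point_fibre_wave m A' c' j' p)
      = (\<Sum>p\<in>vecs m. (\<lambda>r. W (r!0) * (cnj (line_wave m A r) * line_wave m A' r)) (horner_vec m p))"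
    by (rule sum.cong) (auto simp: point_fibre_wave_def W_def algebra_simps)
  also have "\<dots> = (\<Sum>r\<in>vecs m. W (r!0) * (cnj (line_wave m A r) * line_wave m A' r))"
    using sum.reindex_bij_betw[OF bij_betw_horner_vec, of "\<lambda>r. W (r!0) * (cnj (line_wave m A r) * line_wave m A' r)" m] by simp
  also have "\<dots>
      = (if A = A' \<and> c = c' \<and> j = j' then of_nat (CARD('a) ^ m * card (fibre A c)) else 0)"
  proof (cases "A = A'")
    case True
    have "(\<Sum>r\<in>vecs m. W (r!0) * (cnj (line_wave m A r) * line_wave m A' r))
        = of_nat (CARD('a) ^ m) * (\<Sum>x\<in>UNIV. W x)"
      using True line_wave_weighted_sqnorm[of W m A] by simp
    also have "(\<Sum>x\<in>UNIV. W x) = (if c = c' \<and> j = j' then of_nat (card (fibre A c)) else 0)"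
      unfolding W_def using fibre_wave_orthogonal[of j A c j' c'] j j' True by simp
    finally show ?thesis using True by simp
  next
    case False
    then show ?thesis using line_wave_weighted_orthogonal[OF dA dA' False] A0 A0' by simp
  qed
  finally show ?thesis .
qed

text \<open>
  Labels of the eigenbasis: \<open>Signed b P\<close> for \<open>P\<close> with roots (eigenvalue \<open>\<plusminus>\<surd>(q \<cdot> #roots)\<close>),
  \<open>Rootless P\<close> for root-free \<open>P\<close> (eigenvalue \<open>0\<close>, supported on lines) and \<open>Fibre A c j\<close> for
  \<open>A\<close> without constant term, a value \<open>c\<close> of \<open>A\<close> and a nonzero frequency \<open>j\<close> on the fibre
  \<open>A\<^sup>-\<^sup>1(c)\<close> (eigenvalue \<open>0\<close>, supported on points).
\<close>
datatype ('p, 'a) eig_label = Signed bool 'p | Rootless 'p | Fibre 'p 'a nat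

definition sign_of :: "bool \<Rightarrow> real" where "sign_of b = (if b then 1 else -1)"

lemma sign_of_square[simp]: "sign_of b * sign_of b = 1"
  by (simp add: sign_of_def)

lemma sign_of_nonzero[simp]: "sign_of b \<noteq> 0"
  by (simp add: sign_of_def)

definition root_scale :: "'a::{field,finite} poly \<Rightarrow> real" where
  "root_scale P = sqrt (real (CARD('a) * num_roots P))"

fun eig_value :: "('a::{field,finite} poly, 'a) eig_label \<Rightarrow> real" where
  "eig_value (Signed b P) = sign_of b * root_scale P"
| "eig_value (Rootless P) = 0"
| "eig_value (Fibre A c j) = 0"

fun eig_vector :: "nat \<Rightarrow> ('a::{field,finite} poly, 'a) eig_label \<Rightarrow> 'a list + 'a list \<Rightarrow> complex" where
  "eig_vector m (Signed b P) (Inl p) = point_wave m P p / complex_of_real (sign_of b * root_scale P)"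
| "eig_vector m (Signed b P) (Inr l) = line_wave m P l"
| "eig_vector m (Rootless P) (Inl p) = 0"
| "eig_vector m (Rootless P) (Inr l) = line_wave m P l"
| "eig_vector m (Fibre A c j) (Inl p) = point_fibre_wave m A c j p"
| "eig_vector m (Fibre A c j) (Inr l) = 0"

definition adj_weight :: "nat \<Rightarrow> ('a::field list + 'a list) \<Rightarrow> ('a list + 'a list) \<Rightarrow> real" where
  "adj_weight m v w = (if wenger_adj m v w then 1 else 0)"

lemma wenger_vertices_eq: "wenger_vertices m = Inl ` vecs m \<union> Inr ` vecs m"
  by (simp add: wenger_vertices_def vecs_def)

lemma sum_vertices:
  fixes F :: "'a::finite list + 'a list \<Rightarrow> 'b::comm_monoid_add"
  shows "(\<Sum>v\<in>Inl ` vecs m \<union> Inr ` vecs m. F v)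
       = (\<Sum>p\<in>vecs m. F (Inl p)) + (\<Sum>l\<in>vecs m. F (Inr l))"
proof -
  have "(\<Sum>v\<in>Inl ` vecs m \<union> Inr ` vecs m. F v)
      = (\<Sum>v\<in>Inl ` vecs m. F v) + (\<Sum>v\<in>Inr ` vecs m. F v)"
    by (rule sum.union_disjoint) auto
  also have "(\<Sum>v\<in>Inl ` vecs m. F v) = (\<Sum>p\<in>vecs m. F (Inl p))" by (simp add: sum.reindex)
  also have "(\<Sum>v\<in>Inr ` vecs m. F v) = (\<Sum>l\<in>vecs m. F (Inr l))" by (simp add: sum.reindex)
  finally show ?thesis .
qed

lemma of_real_indicator_mult: "complex_of_real (if c then 1 else 0) * x = (if c then x else 0)" by simp

lemma adj_sum_point:
  fixes f :: "'a::{field,finite} list + 'a list \<Rightarrow> complex"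
  assumes p: "p \<in> vecs m"
  shows "(\<Sum>w\<in>Inl ` vecs m \<union> Inr ` vecs m. complex_of_real (adj_weight m (Inl p) w) * f w)
       = (\<Sum>t\<in>UNIV. f (Inr (line_through m p t)))"
proof -
  have "(\<Sum>w\<in>Inl ` vecs m \<union> Inr ` vecs m. complex_of_real (adj_weight m (Inl p) w) * f w)
      = (\<Sum>l\<in>vecs m. if wenger_incident m p l then f (Inr l) else 0)"
    unfolding sum_vertices by (simp add: adj_weight_def wenger_adj_def of_real_indicator_mult)
  also have "\<dots> = (\<Sum>l\<in>{l\<in>vecs m. wenger_incident m p l}. f (Inr l))"
    by (simp add: sum.inter_filter)
  also have "\<dots> = (\<Sum>t\<in>UNIV. f (Inr (line_through m p t)))" by (rule sum_incident_lines[OF p])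
  finally show ?thesis .
qed

lemma adj_sum_line:
  fixes f :: "'a::{field,finite} list + 'a list \<Rightarrow> complex"
  assumes l: "l \<in> vecs m"
  shows "(\<Sum>w\<in>Inl ` vecs m \<union> Inr ` vecs m. complex_of_real (adj_weight m (Inr l) w) * f w)
       = (\<Sum>s\<in>UNIV. f (Inl (point_on m l s)))"
proof -
  have "(\<Sum>w\<in>Inl ` vecs m \<union> Inr ` vecs m. complex_of_real (adj_weight m (Inr l) w) * f w)
      = (\<Sum>p\<in>vecs m. if wenger_incident m p l then f (Inl p) else 0)"
    unfolding sum_vertices by (simp add: adj_weight_def wenger_adj_def of_real_indicator_mult)
  also have "\<dots> = (\<Sum>p\<in>{p\<in>vecs m. wenger_incident m p l}. f (Inl p))"
    by (simp add: sum.inter_filter)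
  also have "\<dots> = (\<Sum>s\<in>UNIV. f (Inl (point_on m l s)))" by (rule sum_incident_points[OF l])
  finally show ?thesis .
qed

definition polys_upto :: "nat \<Rightarrow> 'a::zero poly set" where "polys_upto m = {P. degree P \<le> m}"
definition polys_upto0 :: "nat \<Rightarrow> 'a::zero poly set" where
  "polys_upto0 m = {A. degree A \<le> m \<and> coeff A 0 = 0}"

definition eig_labels :: "nat \<Rightarrow> ('a::{field,finite} poly, 'a) eig_label set" where
  "eig_labels m = {Signed b P | b P. P \<in> polys_upto m \<and> 0 < num_roots P} \<union> {Rootless P | P. P \<in> polys_upto m \<and> num_roots P = 0}
     \<union> {Fibre A c j | A c j. A \<in> polys_upto0 m \<and> c \<in> range (poly A) \<and> 0 < j \<and> j < card (fibre A c)}"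

lemma eig_labelsE:
  assumes "j \<in> eig_labels m"
  obtains (Signed) b P where "j = Signed b P" "P \<in> polys_upto m" "0 < num_roots P"
    | (Rootless) P where "j = Rootless P" "P \<in> polys_upto m" "num_roots P = 0"
    | (Fibre) A c k where "j = Fibre A c k" "A \<in> polys_upto0 m" "c \<in> range (poly A)" "0 < k" "k < card (fibre A c)"
  using assms unfolding eig_labels_def by blast

lemma Signed_in_eig_labels: "P \<in> polys_upto m \<Longrightarrow> 0 < num_roots P \<Longrightarrow> Signed b P \<in> eig_labels m"
  by (auto simp: eig_labels_def)

lemma Rootless_in_eig_labels: "P \<in> polys_upto m \<Longrightarrow> num_roots P = 0 \<Longrightarrow> Rootless P \<in> eig_labels m"
  by (auto simp: eig_labels_def)

lemma root_scale_square: "(root_scale P)^2 = real (CARD('a) * num_roots (P::'a::{field,finite} poly))"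
  by (simp add: root_scale_def)

lemma root_scale_pos: "0 < num_roots P \<Longrightarrow> 0 < root_scale (P::'a::{field,finite} poly)"
  using finite_UNIV_card_ge_0[where 'a='a] by (simp add: root_scale_def)

lemma eigen_Signed:
  fixes P :: "'a::{field,finite} poly"
  assumes P: "P \<in> polys_upto m" "0 < num_roots P" and v: "v \<in> Inl ` vecs m \<union> Inr ` vecs m"
  shows "(\<Sum>w\<in>Inl ` vecs m \<union> Inr ` vecs m. complex_of_real (adj_weight m v w) * eig_vector m (Signed b P) w)
     = complex_of_real (eig_value (Signed b P)) * eig_vector m (Signed b P) v"
proof -
  have dP: "degree P \<le> m" using P by (simp add: polys_upto_def)
  define s where "s = sign_of b * root_scale P"
  have s0: "s \<noteq> 0" using root_scale_pos[OF P(2)] by (simp add: s_def)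
  have ss: "s * s = real (CARD('a) * num_roots P)"
    using root_scale_square[of P] by (simp add: s_def power2_eq_square algebra_simps)
  from v show ?thesis
  proof
    assume "v \<in> Inl ` vecs m"
    then obtain p where p: "p \<in> vecs m" "v = Inl p" by auto
    show ?thesis using s0 unfolding p(2) adj_sum_point[OF p(1)]
      by (simp add: point_wave_def s_def[symmetric])
  next
    assume "v \<in> Inr ` vecs m"
    then obtain l where l: "l \<in> vecs m" "v = Inr l" by auto
    have "(\<Sum>x\<in>UNIV. point_wave m P (point_on m l x) / complex_of_real s)
        = (\<Sum>x\<in>UNIV. point_wave m P (point_on m l x)) / complex_of_real s"
      by (simp add: sum_divide_distrib)
    also have "\<dots> = complex_of_real (s * s) * line_wave m P l / complex_of_real s"
      using sum_point_wave_point_on[OF l(1) dP] ss by simp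
    also have "\<dots> = complex_of_real s * line_wave m P l" using s0 by (simp add: field_simps)
    finally show ?thesis unfolding l(2) adj_sum_line[OF l(1)] by (simp add: s_def[symmetric])
  qed
qed

lemma eigen_Rootless:
  fixes P :: "'a::{field,finite} poly"
  assumes P: "P \<in> polys_upto m" "num_roots P = 0" and v: "v \<in> Inl ` vecs m \<union> Inr ` vecs m"
  shows "(\<Sum>w\<in>Inl ` vecs m \<union> Inr ` vecs m. complex_of_real (adj_weight m v w) * eig_vector m (Rootless P) w)
     = complex_of_real (eig_value (Rootless P)) * eig_vector m (Rootless P) v"
proof -
  have dP: "degree P \<le> m" using P by (simp add: polys_upto_def)
  have nr: "poly P x \<noteq> 0" for x
  proof
    assume "poly P x = 0"
    then have "x \<in> {s. poly P s = 0}" by simp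
    then have "card {s. poly P s = 0} > 0" by (auto simp: card_gt_0_iff)
    then show False using P(2) by (simp add: num_roots_def)
  qed
  from v show ?thesis
  proof
    assume "v \<in> Inl ` vecs m"
    then obtain p where p: "p \<in> vecs m" "v = Inl p" by auto
    show ?thesis unfolding p(2) adj_sum_point[OF p(1)]
      using point_wave_eq_0[OF p(1) dP nr] by (simp add: point_wave_def)
  next
    assume "v \<in> Inr ` vecs m"
    then obtain l where l: "l \<in> vecs m" "v = Inr l" by auto
    show ?thesis unfolding l(2) adj_sum_line[OF l(1)] by simp
  qed
qed

lemma eigen_Fibre:
  fixes A :: "'a::{field,finite} poly"
  assumes A: "A \<in> polys_upto0 m" and j: "0 < j" "j < card (fibre A c)" and v: "v \<in> Inl ` vecs m \<union> Inr ` vecs m"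
  shows "(\<Sum>w\<in>Inl ` vecs m \<union> Inr ` vecs m. complex_of_real (adj_weight m v w) * eig_vector m (Fibre A c j) w)
     = complex_of_real (eig_value (Fibre A c j)) * eig_vector m (Fibre A c j) v"
proof -
  have dA: "degree A \<le> m" "coeff A 0 = 0" using A by (auto simp: polys_upto0_def)
  from v show ?thesis
  proof
    assume "v \<in> Inl ` vecs m"
    then obtain p where p: "p \<in> vecs m" "v = Inl p" by auto
    show ?thesis unfolding p(2) adj_sum_point[OF p(1)] by simp
  next
    assume "v \<in> Inr ` vecs m"
    then obtain l where l: "l \<in> vecs m" "v = Inr l" by auto
    show ?thesis unfolding l(2) adj_sum_line[OF l(1)] using sum_point_fibre_wave_point_on[OF l(1) dA j] by simp
  qed
qed

lemma eigen_eig_vector: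
  assumes "j \<in> eig_labels m" "v \<in> Inl ` vecs m \<union> Inr ` vecs m"
  shows "(\<Sum>w\<in>Inl ` vecs m \<union> Inr ` vecs m. complex_of_real (adj_weight m v w) * eig_vector m j w)
     = complex_of_real (eig_value j) * eig_vector m (j::('a::{field,finite} poly, 'a) eig_label) v"
  using assms(1)
proof (cases rule: eig_labelsE)
  case (Signed b P)
  then show ?thesis using eigen_Signed[OF Signed(2,3) assms(2)] by simp
next
  case (Rootless P)
  then show ?thesis using eigen_Rootless[OF Rootless(2,3) assms(2)] by simp
next
  case (Fibre A c k)
  then show ?thesis using eigen_Fibre[OF Fibre(2,4,5) assms(2)] by simp
qed

section \<open>Orthogonality of the eigenvectors\<close>

fun eig_sqnorm :: "nat \<Rightarrow> ('a::{field,finite} poly, 'a) eig_label \<Rightarrow> complex" where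
  "eig_sqnorm m (Signed b P) = 2 * of_nat (CARD('a) ^ Suc m)"
| "eig_sqnorm m (Rootless P) = of_nat (CARD('a) ^ Suc m)"
| "eig_sqnorm m (Fibre A c j) = of_nat (CARD('a) ^ m * card (fibre A c))"

lemma line_wave_orthogonal:
  fixes P P' :: "'a::{field,finite} poly"
  assumes "P \<in> polys_upto m" "P' \<in> polys_upto m"
  shows "(\<Sum>l\<in>vecs m. cnj (line_wave m P l) * line_wave m P' l)
       = (if P = P' then of_nat (CARD('a) ^ Suc m) else 0)"
proof (cases "P = P'")
  case True
  then show ?thesis using line_wave_weighted_sqnorm[of "\<lambda>_. 1" m P] by (simp add: mult.commute)
next
  case False
  then show ?thesis using line_wave_weighted_orthogonal[of P m P' "\<lambda>_. 1"] assms by (simp add: polys_upto_def)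
qed

lemma point_wave_orthogonal:
  fixes P P' :: "'a::{field,finite} poly"
  assumes "P \<in> polys_upto m" "P' \<in> polys_upto m"
  shows "(\<Sum>p\<in>vecs m. cnj (point_wave m P p) * point_wave m P' p)
     = of_nat (CARD('a) * num_roots P') * (if P = P' then of_nat (CARD('a) ^ Suc m) else 0)"
proof -
  have "(\<Sum>p\<in>vecs m. cnj (point_wave m P p) * point_wave m P' p)
      = (\<Sum>l\<in>vecs m. cnj (line_wave m P l) * (\<Sum>s\<in>UNIV. point_wave m P' (point_on m l s)))"
    by (rule point_wave_adjoint)
  also have "\<dots>
      = (\<Sum>l\<in>vecs m. of_nat (CARD('a) * num_roots P') * (cnj (line_wave m P l) * line_wave m P' l))"
  proof (rule sum.cong)
    fix l :: "'a list" assume l: "l \<in> vecs m"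
    have dP': "degree P' \<le> m" using assms by (simp add: polys_upto_def)
    show "cnj (line_wave m P l) * (\<Sum>s\<in>UNIV. point_wave m P' (point_on m l s))
        = of_nat (CARD('a) * num_roots P') * (cnj (line_wave m P l) * line_wave m P' l)"
      using sum_point_wave_point_on[OF l dP'] by (simp add: algebra_simps)
  qed simp
  also have "\<dots>
      = of_nat (CARD('a) * num_roots P') * (\<Sum>l\<in>vecs m. cnj (line_wave m P l) * line_wave m P' l)"
    by (simp add: sum_distrib_left)
  finally show ?thesis using line_wave_orthogonal[OF assms] by simp
qed

lemma point_wave_point_fibre_wave_orthogonal:
  fixes P A :: "'a::{field,finite} poly"
  assumes "A \<in> polys_upto0 m" "0 < k" "k < card (fibre A c)"
  shows "(\<Sum>p\<in>vecs m. cnj (point_wave m P p) * point_fibre_wave m A c k p) = 0"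
proof -
  have "(\<Sum>p\<in>vecs m. cnj (point_wave m P p) * point_fibre_wave m A c k p)
      = (\<Sum>l\<in>vecs m. cnj (line_wave m P l) * (\<Sum>s\<in>UNIV. point_fibre_wave m A c k (point_on m l s)))"
    by (rule point_wave_adjoint)
  also have "\<dots> = 0"
  proof (rule sum.neutral, rule ballI)
    fix l :: "'a list" assume l: "l \<in> vecs m"
    have dA: "degree A \<le> m" "coeff A 0 = 0" using assms by (auto simp: polys_upto0_def)
    show "cnj (line_wave m P l) * (\<Sum>s\<in>UNIV. point_fibre_wave m A c k (point_on m l s)) = 0"
      using sum_point_fibre_wave_point_on[OF l dA assms(2,3)] by simp
  qed
  finally show ?thesis .
qed

lemma orthogonal_Signed:
  fixes P P' :: "'a::{field,finite} poly"
  assumes P: "P \<in> polys_upto m" "0 < num_roots P" and P': "P' \<in> polys_upto m" "0 < num_roots P'"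
  shows "(\<Sum>v\<in>Inl ` vecs m \<union> Inr ` vecs m. cnj (eig_vector m (Signed b P) v) * eig_vector m (Signed b' P') v)
     = (if Signed b P = Signed b' P' then eig_sqnorm m (Signed b P) else 0)"
proof -
  let ?Q = "of_nat (CARD('a) ^ Suc m) :: complex"
  define s where "s = sign_of b * root_scale P"
  define s' where "s' = sign_of b' * root_scale P'"
  have s0: "s \<noteq> 0" "s' \<noteq> 0" using root_scale_pos[OF P(2)] root_scale_pos[OF P'(2)] by (auto simp: s_def s'_def)
  have point_on: "(\<Sum>p\<in>vecs m. cnj (eig_vector m (Signed b P) (Inl p)) * eig_vector m (Signed b' P') (Inl p))
       = (\<Sum>p\<in>vecs m. cnj (point_wave m P p) * point_wave m P' p) / complex_of_real (s * s')"
    by (simp add: s_def s'_def sum_divide_distrib)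
  have ln: "(\<Sum>l\<in>vecs m. cnj (eig_vector m (Signed b P) (Inr l)) * eig_vector m (Signed b' P') (Inr l))
      = (if P = P' then ?Q else 0)"
    using line_wave_orthogonal[OF P(1) P'(1)] by simp
  show ?thesis
  proof (cases "P = P'")
    case False
    then show ?thesis unfolding sum_vertices point_on ln point_wave_orthogonal[OF P(1) P'(1)] by simp
  next
    case True
    have ss: "s * s' = sign_of b * sign_of b' * real (CARD('a) * num_roots P)"
      using root_scale_square[of P] True by (simp add: s_def s'_def power2_eq_square algebra_simps)
    have r0: "real (CARD('a) * num_roots P) \<noteq> 0"
      using P(2) finite_UNIV_card_ge_0[where 'a='a] by simp
    have "(\<Sum>p\<in>vecs m. cnj (point_wave m P p) * point_wave m P' p) / complex_of_real (s * s')
        = complex_of_real (real (CARD('a) * num_roots P)) * ?Q / complex_of_real (sign_of b * sign_of b' * real (CARD('a) * num_roots P))"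
      unfolding point_wave_orthogonal[OF P(1) P'(1)] ss using True by simp
    also have "\<dots> = ?Q / complex_of_real (sign_of b * sign_of b')"
      using r0 by (simp add: field_simps)
    finally have e: "(\<Sum>p\<in>vecs m. cnj (point_wave m P p) * point_wave m P' p) / complex_of_real (s * s')
        = ?Q / complex_of_real (sign_of b * sign_of b')" .
    show ?thesis
    proof (cases "b = b'")
      case True
      then show ?thesis unfolding sum_vertices point_on ln e using \<open>P = P'\<close> by simp
    next
      case False
      then have "sign_of b * sign_of b' = -1" by (cases b; cases b') (auto simp: sign_of_def)
      then show ?thesis unfolding sum_vertices point_on ln e using \<open>P = P'\<close> False by simp
    qed
  qed
qed

lemma orthogonal_Signed_eig_vector:
  fixes j' :: "('a::{field,finite} poly, 'a) eig_label"
  assumes P: "P \<in> polys_upto m" "0 < num_roots P" and j': "j' \<in> eig_labels m"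
  shows "(\<Sum>v\<in>Inl ` vecs m \<union> Inr ` vecs m. cnj (eig_vector m (Signed b P) v) * eig_vector m j' v)
       = (if Signed b P = j' then eig_sqnorm m (Signed b P) else 0)"
  using j'
proof (cases rule: eig_labelsE)
  case (Signed b' P')
  then show ?thesis using orthogonal_Signed[OF P Signed(2,3)] by simp
next
  case (Rootless P')
  then have "P \<noteq> P'" using P by auto
  then show ?thesis unfolding sum_vertices using Rootless line_wave_orthogonal[OF P(1) Rootless(2)] by simp
next
  case (Fibre A c k)
  then show ?thesis unfolding sum_vertices
    using point_wave_point_fibre_wave_orthogonal[OF Fibre(2,4,5), of P] by (simp add: sum_divide_distrib[symmetric])
qed

lemma orthogonal_Rootless_eig_vector:
  fixes j' :: "('a::{field,finite} poly, 'a) eig_label"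
  assumes P: "P \<in> polys_upto m" "num_roots P = 0" and j': "j' \<in> eig_labels m"
  shows "(\<Sum>v\<in>Inl ` vecs m \<union> Inr ` vecs m. cnj (eig_vector m (Rootless P) v) * eig_vector m j' v)
       = (if Rootless P = j' then eig_sqnorm m (Rootless P) else 0)"
  using j'
proof (cases rule: eig_labelsE)
  case (Signed b' P')
  then have "P \<noteq> P'" using P by auto
  then show ?thesis unfolding sum_vertices using Signed line_wave_orthogonal[OF P(1) Signed(2)] by simp
next
  case (Rootless P')
  then show ?thesis unfolding sum_vertices using line_wave_orthogonal[OF P(1) Rootless(2)] by simp
qed (simp add: sum_vertices)

lemma orthogonal_Fibre_eig_vector:
  fixes j' :: "('a::{field,finite} poly, 'a) eig_label"
  assumes A: "A \<in> polys_upto0 m" "0 < k" "k < card (fibre A c)" and j': "j' \<in> eig_labels m"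
  shows "(\<Sum>v\<in>Inl ` vecs m \<union> Inr ` vecs m. cnj (eig_vector m (Fibre A c k) v) * eig_vector m j' v)
       = (if Fibre A c k = j' then eig_sqnorm m (Fibre A c k) else 0)"
  using j'
proof (cases rule: eig_labelsE)
  case (Signed b' P')
  have "(\<Sum>p\<in>vecs m. cnj (point_fibre_wave m A c k p) * point_wave m P' p)
      = cnj (\<Sum>p\<in>vecs m. cnj (point_wave m P' p) * point_fibre_wave m A c k p)"
    by (simp add: mult.commute)
  also have "\<dots> = 0" using point_wave_point_fibre_wave_orthogonal[OF A, of P'] by simp
  finally show ?thesis unfolding sum_vertices using Signed by (simp add: sum_divide_distrib[symmetric])
next
  case (Fibre A' c' k')
  then show ?thesis unfolding sum_vertices
    using A point_fibre_wave_orthogonal[of A m A' k c k' c'] by (auto simp: polys_upto0_def)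
qed (simp add: sum_vertices)

lemma orthogonal_eig_vector:
  fixes j j' :: "('a::{field,finite} poly, 'a) eig_label"
  assumes j: "j \<in> eig_labels m" and j': "j' \<in> eig_labels m"
  shows "(\<Sum>v\<in>Inl ` vecs m \<union> Inr ` vecs m. cnj (eig_vector m j v) * eig_vector m j' v)
       = (if j = j' then eig_sqnorm m j else 0)"
  using j
proof (cases rule: eig_labelsE)
  case (Signed b P)
  then show ?thesis using orthogonal_Signed_eig_vector[OF Signed(2,3) j'] by simp
next
  case (Rootless P)
  then show ?thesis using orthogonal_Rootless_eig_vector[OF Rootless(2,3) j'] by simp
next
  case (Fibre A c k)
  then show ?thesis using orthogonal_Fibre_eig_vector[OF Fibre(2,4,5) j'] by simp
qed

lemma eig_sqnorm_nonzero:
  fixes j :: "('a::{field,finite} poly, 'a) eig_label"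
  assumes "j \<in> eig_labels m"
  shows "eig_sqnorm m j \<noteq> 0"
  using assms finite_UNIV_card_ge_0[where 'a='a] unfolding eig_labels_def by auto

section \<open>Counting polynomials by their roots\<close>

lemma bij_betw_coeffs_polys_upto:
  "bij_betw (\<lambda>P. map (coeff P) [0..<Suc d]) (polys_upto d :: 'a::{field,finite} poly set) (vecs d)"
proof -
  let ?cl = "\<lambda>P::'a poly. map (coeff P) [0..<Suc d]"
  have inj: "inj_on ?cl (polys_upto d)"
  proof (rule inj_onI)
    fix P P' :: "'a poly" assume a: "P \<in> polys_upto d" "P' \<in> polys_upto d" "?cl P = ?cl P'"
    show "P = P'"
    proof (rule poly_eqI)
      fix i
      show "coeff P i = coeff P' i"
      proof (cases "i \<le> d")
        case True
        have "?cl P ! i = ?cl P' ! i" by (simp only: a(3))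
        then show ?thesis using True by (simp add: nth_map_upt del: upt_Suc)
      next
        case False
        then show ?thesis using a(1,2) by (simp add: polys_upto_def coeff_eq_0)
      qed
    qed
  qed
  have img: "?cl ` polys_upto d = vecs d"
  proof (intro equalityI subsetI)
    fix l assume "l \<in> ?cl ` polys_upto d" then show "l \<in> vecs d" by (auto simp: vecs_def)
  next
    fix l :: "'a list" assume l: "l \<in> vecs d"
    have dg: "degree (Poly l) \<le> d"
    proof (rule degree_le, intro allI impI)
      fix i assume "d < i"
      then show "coeff (Poly l) i = 0" using l by (simp add: vecs_def coeff_Poly nth_default_def)
    qed
    have "?cl (Poly l) = l"
      using l by (intro nth_equalityI) (auto simp: vecs_def coeff_Poly nth_default_def simp del: upt_Suc)
    then show "l \<in> ?cl ` polys_upto d" using dg by (metis polys_upto_def image_eqI mem_Collect_eq)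
  qed
  show ?thesis using inj img by (simp add: bij_betw_def)
qed

lemma finite_polys_upto[simp]: "finite (polys_upto d :: 'a::{field,finite} poly set)"
  using bij_betw_coeffs_polys_upto[of d, where 'a='a] bij_betw_finite finite_vecs by blast

lemma card_polys_upto: "card (polys_upto d :: 'a::{field,finite} poly set) = CARD('a) ^ Suc d"
  using bij_betw_same_card[OF bij_betw_coeffs_polys_upto[of d, where 'a='a]] card_vecs by metis

lemma vanish_on_iff_dvd:
  fixes P :: "'a::field poly"
  assumes "finite T"
  shows "(\<forall>s\<in>T. poly P s = 0) \<longleftrightarrow> (\<Prod>t\<in>T. [:-t, 1:]) dvd P"
  using assms
proof (induction T arbitrary: P rule: finite_induct)
  case empty
  then show ?case by simp
next
  case (insert t T)
  show ?case
  proof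
    assume vanish: "\<forall>s\<in>insert t T. poly P s = 0"
    then have "[:-t, 1:] dvd P" by (simp add: poly_eq_0_iff_dvd)
    then obtain P1 where P1: "P = [:-t, 1:] * P1" by (elim dvdE)
    have "\<forall>s\<in>T. poly P1 s = 0"
    proof
      fix s assume s: "s \<in> T"
      then have "s \<noteq> t" using insert by auto
      moreover have "poly P s = 0" using vanish s by auto
      ultimately show "poly P1 s = 0" using P1 by simp
    qed
    then have "(\<Prod>t\<in>T. [:-t, 1:]) dvd P1" using insert.IH by blast
    then have "[:-t, 1:] * (\<Prod>t\<in>T. [:-t, 1:]) dvd [:-t, 1:] * P1" by (rule mult_dvd_mono[OF dvd_refl])
    then show "(\<Prod>t\<in>insert t T. [:-t, 1:]) dvd P" by (simp only: P1 prod.insert[OF insert(1,2)])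
  next
    assume "(\<Prod>t\<in>insert t T. [:-t, 1:]) dvd P"
    then have d: "[:-t, 1:] * (\<Prod>t\<in>T. [:-t, 1:]) dvd P" by (simp only: prod.insert[OF insert(1,2)])
    then have "[:-t, 1:] dvd P" using dvd_mult_left by blast
    moreover have "(\<Prod>t\<in>T. [:-t, 1:]) dvd P" using d dvd_mult_right by blast
    ultimately show "\<forall>s\<in>insert t T. poly P s = 0" using insert.IH by (simp add: poly_eq_0_iff_dvd)
  qed
qed

lemma prod_linear_factors_props:
  fixes T :: "'a::field set"
  assumes "finite T"
  shows "(\<Prod>t\<in>T. [:-t, 1:]) \<noteq> 0" "degree (\<Prod>t\<in>T. [:-t, 1:]) = card T"
proof -
  show "(\<Prod>t\<in>T. [:-t, 1:]) \<noteq> 0" using assms by (simp add: prod_zero_iff)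
  have "degree (\<Prod>t\<in>T. [:-t, 1:]) = (\<Sum>t\<in>T. degree [:-t, 1:])"
    by (rule degree_prod_eq_sum_degree) simp
  then show "degree (\<Prod>t\<in>T. [:-t, 1:]) = card T" by simp
qed

lemma card_polys_upto_multiples:
  fixes Q :: "'a::{field,finite} poly"
  assumes Q: "Q \<noteq> 0" "degree Q \<le> m"
  shows "card {P \<in> polys_upto m. Q dvd P} = CARD('a) ^ (Suc m - degree Q)"
proof -
  have img: "{P \<in> polys_upto m. Q dvd P} = (\<lambda>C. Q * C) ` polys_upto (m - degree Q)"
  proof (intro equalityI subsetI)
    fix P assume "P \<in> {P \<in> polys_upto m. Q dvd P}"
    then have P: "degree P \<le> m" "Q dvd P" by (auto simp: polys_upto_def)
    then obtain C where C: "P = Q * C" by (elim dvdE)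
    have "degree C \<le> m - degree Q"
    proof (cases "C = 0")
      case False
      then have "degree P = degree Q + degree C" using C Q by (simp add: degree_mult_eq)
      then show ?thesis using P by simp
    qed simp
    then show "P \<in> (\<lambda>C. Q * C) ` polys_upto (m - degree Q)" using C by (auto simp: polys_upto_def)
  next
    fix P assume "P \<in> (\<lambda>C. Q * C) ` polys_upto (m - degree Q)"
    then obtain C where C: "P = Q * C" "degree C \<le> m - degree Q" by (auto simp: polys_upto_def)
    have "degree P \<le> degree Q + degree C" using C(1) degree_mult_le[of Q C] by simp
    then show "P \<in> {P \<in> polys_upto m. Q dvd P}" using C Q by (auto simp: polys_upto_def)
  qed
  have "inj_on (\<lambda>C. Q * C) (polys_upto (m - degree Q))" using Q by (auto simp: inj_on_def)
  then have "card {P \<in> polys_upto m. Q dvd P} = card (polys_upto (m - degree Q) :: 'a poly set)"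
    unfolding img by (rule card_image)
  also have "\<dots> = CARD('a) ^ (Suc m - degree Q)" using Q(2) by (simp add: card_polys_upto Suc_diff_le)
  finally show ?thesis .
qed

lemma card_polys_upto_vanishing_on:
  fixes T :: "'a::{field,finite} set"
  shows "card {P \<in> polys_upto m. \<forall>s\<in>T. poly P s = 0} = CARD('a) ^ (Suc m - card T)"
proof (cases "card T \<le> m")
  case True
  define Q where "Q = (\<Prod>t\<in>T. [:-t, 1:])"
  have "Q \<noteq> 0" "degree Q = card T" using prod_linear_factors_props[of T] by (simp_all add: Q_def)
  moreover have "{P \<in> polys_upto m. \<forall>s\<in>T. poly P s = 0} = {P \<in> polys_upto m. Q dvd P}"
    using vanish_on_iff_dvd[of T] by (auto simp: Q_def)
  ultimately show ?thesis using card_polys_upto_multiples[of Q m] True by simp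
next
  case False
  have "{P \<in> polys_upto m. \<forall>s\<in>T. poly P s = 0} = {0}"
  proof (intro equalityI subsetI)
    fix P assume P: "P \<in> {P \<in> polys_upto m. \<forall>s\<in>T. poly P s = 0}"
    show "P \<in> {0}"
    proof (rule ccontr)
      assume "P \<notin> {0}"
      have "card T \<le> card {x. poly P x = 0}" using P by (intro card_mono) auto
      also have "\<dots> \<le> degree P" using \<open>P \<notin> {0}\<close> by (intro card_poly_roots_bound) simp
      also have "\<dots> \<le> m" using P by (simp add: polys_upto_def)
      finally show False using False by simp
    qed
  qed (auto simp: polys_upto_def)
  then show ?thesis using False by simp
qed

lemma sum_Pow_card:
  fixes g :: "nat \<Rightarrow> 'b::comm_semiring_1"
  assumes "finite X"
  shows "(\<Sum>U\<in>Pow X. g (card U)) = (\<Sum>k\<le>card X. of_nat (card X choose k) * g k)"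
proof -
  have P: "Pow X = (\<Union>k\<in>{..card X}. {U. U \<subseteq> X \<and> card U = k})"
    using assms by (auto intro: card_mono)
  have "(\<Sum>U\<in>Pow X. g (card U))
      = (\<Sum>k\<le>card X. \<Sum>U\<in>{U. U \<subseteq> X \<and> card U = k}. g (card U))"
    unfolding P by (rule sum.UNION_disjoint) (use assms in auto)
  also have "\<dots> = (\<Sum>k\<le>card X. of_nat (card X choose k) * g k)"
    by (rule sum.cong) (simp_all add: n_subsets[OF assms])
  finally show ?thesis .
qed

lemma sum_Pow_alternating:
  assumes "finite X"
  shows "(\<Sum>U\<in>Pow X. (-1::int) ^ card U) = (if X = {} then 1 else 0)"
proof (cases "X = {}")
  case False
  then have "card X > 0" using assms by auto
  then show ?thesis
    using sum_Pow_card[OF assms, of "\<lambda>k. (-1::int)^k"] choose_alternating_sum[of "card X", where 'a=int] False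
    by (simp add: mult.commute)
qed simp

lemma sum_between_reindex:
  fixes S R :: "'x set"
  assumes "S \<subseteq> R" "finite R"
  shows "(\<Sum>T\<in>{T. S \<subseteq> T \<and> T \<subseteq> R}. g (card T - card S))
       = (\<Sum>U\<in>Pow (R - S). g (card U))"
proof -
  have inj: "inj_on (\<lambda>U. S \<union> U) (Pow (R - S))" by (auto simp: inj_on_def)
  have img: "(\<lambda>U. S \<union> U) ` Pow (R - S) = {T. S \<subseteq> T \<and> T \<subseteq> R}"
  proof (intro equalityI subsetI)
    fix T assume "T \<in> {T. S \<subseteq> T \<and> T \<subseteq> R}"
    then have "T = S \<union> (T - S)" "T - S \<in> Pow (R - S)" by auto
    then show "T \<in> (\<lambda>U. S \<union> U) ` Pow (R - S)" by blast
  qed (use assms in auto)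
  have "(\<Sum>T\<in>{T. S \<subseteq> T \<and> T \<subseteq> R}. g (card T - card S))
      = (\<Sum>U\<in>Pow (R - S). g (card (S \<union> U) - card S))"
    unfolding img[symmetric] by (rule sum.reindex[OF inj, unfolded comp_def])
  also have "\<dots> = (\<Sum>U\<in>Pow (R - S). g (card U))"
  proof (rule sum.cong)
    fix U assume "U \<in> Pow (R - S)"
    then have "card (S \<union> U) = card S + card U"
      using assms by (intro card_Un_disjoint) (auto intro: finite_subset)
    then show "g (card (S \<union> U) - card S) = g (card U)" by simp
  qed simp
  finally show ?thesis .
qed

lemma sum_between_alternating:
  fixes S R :: "'x set"
  assumes "finite R"
  shows "(\<Sum>T\<in>{T. S \<subseteq> T \<and> T \<subseteq> R}. (-1::int) ^ (card T - card S))
       = (if R = S then 1 else 0)"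
proof (cases "S \<subseteq> R")
  case True
  have "(\<Sum>T\<in>{T. S \<subseteq> T \<and> T \<subseteq> R}. (-1::int) ^ (card T - card S))
      = (\<Sum>U\<in>Pow (R - S). (-1) ^ card U)"
    by (rule sum_between_reindex[OF True assms])
  also have "\<dots> = (if R - S = {} then 1 else 0)" by (rule sum_Pow_alternating) (use assms in simp)
  finally show ?thesis using True by auto
next
  case False
  have "{T. S \<subseteq> T \<and> T \<subseteq> R} = {}" using False by auto
  moreover have "R \<noteq> S" using False by auto
  ultimately show ?thesis by (simp only: sum.empty) simp
qed

lemma card_filter_eq_sum:
  assumes "finite A"
  shows "int (card {x \<in> A. Q x}) = (\<Sum>x\<in>A. if Q x then 1 else 0)"
  using assms by (simp add: sum.If_cases Int_def)

lemma card_eq_inclusion_exclusion: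
  fixes R :: "'x \<Rightarrow> 'a::finite set"
  assumes X: "finite X"
  shows "int (card {x \<in> X. R x = S})
       = (\<Sum>T\<in>{T. S \<subseteq> T}. (-1) ^ (card T - card S) * int (card {x \<in> X. T \<subseteq> R x}))"
proof -
  have "(\<Sum>T\<in>{T. S \<subseteq> T}. (-1) ^ (card T - card S) * int (card {x \<in> X. T \<subseteq> R x}))
      = (\<Sum>T\<in>{T. S \<subseteq> T}. \<Sum>x\<in>X. if T \<subseteq> R x then (-1) ^ (card T - card S) else 0)"
    by (simp add: card_filter_eq_sum[OF X] sum_distrib_left if_distrib[of "(*) _"] cong: if_cong)
  also have "\<dots>
      = (\<Sum>x\<in>X. \<Sum>T\<in>{T. S \<subseteq> T}. if T \<subseteq> R x then (-1) ^ (card T - card S) else 0)"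
    by (rule sum.swap)
  also have "\<dots>
      = (\<Sum>x\<in>X. \<Sum>T\<in>{T. S \<subseteq> T \<and> T \<subseteq> R x}. (-1) ^ (card T - card S))"
    by (simp add: sum.inter_filter[symmetric] conj_commute)
  also have "\<dots> = (\<Sum>x\<in>X. if R x = S then 1 else 0)"
    by (simp add: sum_between_alternating)
  also have "\<dots> = int (card {x \<in> X. R x = S})" by (rule card_filter_eq_sum[OF X, symmetric])
  finally show ?thesis ..
qed

definition root_set :: "'a::{field,finite} poly \<Rightarrow> 'a set" where
  "root_set P = {s. poly P s = 0}"

lemma card_polys_upto_root_set:
  fixes S :: "'a::{field,finite} set"
  shows "int (card {P \<in> polys_upto m. root_set P = S})
       = (\<Sum>k\<le>CARD('a) - card S. of_nat ((CARD('a) - card S) choose k)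
            * ((-1) ^ k * int CARD('a) ^ (Suc m - (card S + k))))"
proof -
  let ?g = "\<lambda>k. (-1::int) ^ k * int CARD('a) ^ (Suc m - (card S + k))"
  have "int (card {P \<in> polys_upto m. root_set P = S})
      = (\<Sum>T\<in>{T. S \<subseteq> T}. (-1) ^ (card T - card S) * int (card {P \<in> polys_upto m. T \<subseteq> root_set P}))"
    by (rule card_eq_inclusion_exclusion) simp
  also have "\<dots> = (\<Sum>T\<in>{T. S \<subseteq> T \<and> T \<subseteq> UNIV}. ?g (card T - card S))"
  proof (rule sum.cong)
    fix T :: "'a set" assume "T \<in> {T. S \<subseteq> T \<and> T \<subseteq> UNIV}"
    then have "card T = card S + (card T - card S)" using card_mono[of T S] by simp
    moreover have "{P \<in> polys_upto m. T \<subseteq> root_set P}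
        = {P \<in> polys_upto m. \<forall>s\<in>T. poly P s = 0}"
      by (auto simp: root_set_def)
    ultimately show "(-1) ^ (card T - card S) * int (card {P \<in> polys_upto m. T \<subseteq> root_set P})
        = ?g (card T - card S)"
      by (simp add: card_polys_upto_vanishing_on)
  qed simp
  also have "\<dots> = (\<Sum>U\<in>Pow (UNIV - S). ?g (card U))" by (rule sum_between_reindex) simp_all
  also have "\<dots> = (\<Sum>k\<le>card (UNIV - S). of_nat (card (UNIV - S) choose k) * ?g k)"
    by (rule sum_Pow_card) simp
  finally show ?thesis by (simp add: card_Diff_subset)
qed

lemma card_polys_upto_num_roots_eq_sum:
  fixes i m :: nat
  shows "card {P \<in> (polys_upto m :: 'a::{field,finite} poly set). num_roots P = i}
       = (\<Sum>S\<in>{S::'a set. card S = i}. card {P \<in> polys_upto m. root_set P = S})"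
proof -
  have "{P \<in> (polys_upto m :: 'a poly set). num_roots P = i}
      = (\<Union>S\<in>{S::'a set. card S = i}. {P \<in> polys_upto m. root_set P = S})"
    by (auto simp: num_roots_def root_set_def)
  then show ?thesis by (simp only:) (rule card_UN_disjoint, auto)
qed

text \<open>
  Brings the inclusion-exclusion count into the shape of \<open>wenger_mult\<close>. The exponent
  \<open>Suc M - k\<close> is truncated at \<open>0\<close>; raising \<open>M\<close> by one adds \<open>q - 1\<close> times the next partial sum.
\<close>
lemma alternating_binomial_geometric:
  fixes q :: int
  assumes "M < n"
  shows "(\<Sum>k\<le>n. of_nat (n choose k) * ((-1)^k * q^(Suc M - k)))
       = (q - 1) * (\<Sum>e\<le>M. \<Sum>k\<le>e. (-1)^k * of_nat (n choose k) * q^(e - k))"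
  using assms
proof (induction M)
  case 0
  have t: "of_nat (n choose k) * ((-1)^k * q^(Suc 0 - k))
      = (-1)^k * of_nat (n choose k) + (if k = 0 then q - 1 else 0)" for k
    by (cases k) auto
  have "(\<Sum>k\<le>n. of_nat (n choose k) * ((-1)^k * q^(Suc 0 - k)))
      = (\<Sum>k\<le>n. (-1)^k * of_nat (n choose k)) + (\<Sum>k\<le>n. if k = 0 then q - 1 else 0)"
    by (simp only: t sum.distrib)
  also have "(\<Sum>k\<le>n. (-1)^k * of_nat (n choose k)) = (0::int)" using choose_alternating_sum[of n] 0 by simp
  also have "(\<Sum>k\<le>n. if k = 0 then q - 1 else 0) = q - 1" by (simp add: sum.delta)
  finally show ?case by simp
next
  case (Suc M)
  have IH: "(\<Sum>k\<le>n. of_nat (n choose k) * ((-1)^k * q^(Suc M - k)))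
       = (q - 1) * (\<Sum>e\<le>M. \<Sum>k\<le>e. (-1)^k * of_nat (n choose k) * q^(e - k))" using Suc by simp
  have t: "of_nat (n choose k) * ((-1)^k * q^(Suc (Suc M) - k))
      = of_nat (n choose k) * ((-1)^k * q^(Suc M - k)) + (if k \<le> Suc M then (q - 1) * ((-1)^k * of_nat (n choose k) * q^(Suc M - k)) else 0)" for k
  proof (cases "k \<le> Suc M")
    case True
    then have "Suc (Suc M) - k = Suc (Suc M - k)" by simp
    then show ?thesis using True by (simp add: algebra_simps)
  next
    case False
    then have "Suc (Suc M) - k = 0" "Suc M - k = 0" by auto
    then show ?thesis using False by simp
  qed
  have "(\<Sum>k\<le>n. of_nat (n choose k) * ((-1)^k * q^(Suc (Suc M) - k)))
      = (\<Sum>k\<le>n. of_nat (n choose k) * ((-1)^k * q^(Suc M - k))) + (\<Sum>k\<le>n. if k \<le> Suc M then (q - 1) * ((-1)^k * of_nat (n choose k) * q^(Suc M - k)) else 0)"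
    by (simp only: t sum.distrib)
  also have "(\<Sum>k\<le>n. if k \<le> Suc M then (q - 1) * ((-1)^k * of_nat (n choose k) * q^(Suc M - k)) else 0)
      = (\<Sum>k\<le>Suc M. (q - 1) * ((-1)^k * of_nat (n choose k) * q^(Suc M - k)))"
  proof -
    have e: "{k\<in>{..n}. k \<le> Suc M} = {..Suc M}" using Suc.prems by auto
    show ?thesis
      using sum.inter_filter[of "{..n}" "\<lambda>k. (q - 1) * ((-1)^k * of_nat (n choose k) * q^(Suc M - k))" "\<lambda>k. k \<le> Suc M"]
      unfolding e by simp
  qed
  also have "\<dots> = (q - 1) * (\<Sum>k\<le>Suc M. (-1)^k * of_nat (n choose k) * q^(Suc M - k))"
    by (simp only: sum_distrib_left)
  finally show ?case unfolding IH by (simp add: algebra_simps)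
qed

lemma card_polys_upto_num_roots:
  fixes i m :: nat
  assumes "i \<le> m" "m < CARD('a::{field,finite})"
  shows "int (card {P \<in> (polys_upto m :: 'a poly set). num_roots P = i}) = wenger_mult CARD('a) m i"
proof -
  define M where "M = m - i"
  define n where "n = CARD('a) - i"
  define V where "V = (\<Sum>k\<le>n. of_nat (n choose k) * ((-1)^k * int CARD('a) ^ (Suc M - k)))"
  have "int (card {P \<in> polys_upto m. root_set P = S}) = V" if "card S = i" for S :: "'a set"
    unfolding card_polys_upto_root_set V_def using that assms(1) by (intro sum.cong) (simp_all add: n_def M_def)
  then have "int (card {P \<in> (polys_upto m :: 'a poly set). num_roots P = i})
      = (\<Sum>S\<in>{S::'a set. card S = i}. V)"
    unfolding card_polys_upto_num_roots_eq_sum of_nat_sum by (intro sum.cong) simp_all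
  also have "\<dots> = int (CARD('a) choose i) * V" using n_subsets[of "UNIV :: 'a set" i] by simp
  also have "\<dots> = (int CARD('a) - 1) * int (CARD('a) choose i)
      * (\<Sum>e\<le>M. \<Sum>k\<le>e. (-1)^k * of_nat (n choose k) * int CARD('a) ^ (e - k))"
  proof -
    have "M < n" using assms by (simp add: M_def n_def)
    then show ?thesis unfolding V_def by (simp add: alternating_binomial_geometric)
  qed
  also have "(\<Sum>e\<le>M. \<Sum>k\<le>e. (-1)^k * of_nat (n choose k) * int CARD('a) ^ (e - k))
      = (\<Sum>d = i..m. \<Sum>k = 0..d - i. (-1) ^ k * int ((CARD('a) - i) choose k) * int CARD('a) ^ (d - i - k))"
  proof -
    have "{i..m} = {0 + i..M + i}" using assms by (simp add: M_def)
    then show ?thesis by (simp only: sum.shift_bounds_cl_nat_ivl) (simp add: n_def atLeast0AtMost)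
  qed
  finally show ?thesis by (simp add: wenger_mult_def)
qed

section \<open>Size of the eigenbasis\<close>

definition rooted_polys :: "nat \<Rightarrow> 'a::{field,finite} poly set" where
  "rooted_polys m = {P \<in> polys_upto m. 0 < num_roots P}"
definition rootless_polys :: "nat \<Rightarrow> 'a::{field,finite} poly set" where
  "rootless_polys m = {P \<in> polys_upto m. num_roots P = 0}"

lemma num_roots_diff_const: "num_roots (A - [:c:]) = card (fibre A c)"
  by (simp add: num_roots_def fibre_def)

lemma finite_polys_upto0[simp]: "finite (polys_upto0 m :: 'a::{field,finite} poly set)"
  by (rule finite_subset[OF _ finite_polys_upto[of m]]) (auto simp: polys_upto0_def polys_upto_def)

lemma card_rootless_polys:
  "card (rootless_polys m :: 'a::{field,finite} poly set) = (\<Sum>A\<in>(polys_upto0 m :: 'a poly set). CARD('a) - card (range (poly A)))"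
proof -
  let ?D = "{(A, c). A \<in> (polys_upto0 m :: 'a poly set) \<and> c \<notin> range (poly A)}"
  have D: "?D = Sigma (polys_upto0 m) (\<lambda>A. UNIV - range (poly A))" by auto
  have cD: "card ?D = (\<Sum>A\<in>(polys_upto0 m :: 'a poly set). CARD('a) - card (range (poly A)))"
    unfolding D by (simp add: card_SigmaI card_Diff_subset)
  have inj: "inj_on (\<lambda>(A, c). A - [:c:]) ?D"
  proof (rule inj_onI, clarify)
    fix A A' :: "'a poly" and c c' :: 'a assume a: "A \<in> polys_upto0 m" "A' \<in> polys_upto0 m" "A - [:c:] = A' - [:c':]"
    have "coeff (A - [:c:]) 0 = coeff (A' - [:c':]) 0" using a(3) by simp
    then have c_eq: "c = c'" using a(1,2) by (simp add: polys_upto0_def algebra_simps)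
    then show "A = A' \<and> c = c'" using a(3) by simp
  qed
  have img: "(\<lambda>(A, c). A - [:c:]) ` ?D = rootless_polys m"
  proof (intro equalityI subsetI)
    fix P assume "P \<in> (\<lambda>(A, c). A - [:c:]) ` ?D"
    then obtain A c where A: "A \<in> polys_upto0 m" "c \<notin> range (poly A)" "P = A - [:c:]" by auto
    have "degree P \<le> m" using A(1,3) degree_diff_le[of A m "[:c:]"] by (simp add: polys_upto0_def)
    moreover have "fibre A c = {}" using A(2) by (auto simp: fibre_def)
    ultimately show "P \<in> rootless_polys m" using A(3) by (simp add: rootless_polys_def polys_upto_def num_roots_diff_const)
  next
    fix P :: "'a poly" assume P: "P \<in> rootless_polys m"
    define c where "c = - coeff P 0"
    define A where "A = P + [:c:]"
    have dA: "degree A \<le> m" using P degree_add_le[of P m "[:c:]"] by (simp add: A_def rootless_polys_def polys_upto_def)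
    have A0: "coeff A 0 = 0" by (simp add: A_def c_def)
    have nr: "poly P s \<noteq> 0" for s
    proof
      assume "poly P s = 0"
      then have "card {s. poly P s = 0} > 0" by (auto simp: card_gt_0_iff)
      then show False using P by (simp add: rootless_polys_def num_roots_def)
    qed
    have "c \<notin> range (poly A)" using nr by (auto simp: A_def)
    moreover have "P = A - [:c:]" by (simp add: A_def)
    ultimately show "P \<in> (\<lambda>(A, c). A - [:c:]) ` ?D" using dA A0 by (auto simp: polys_upto0_def)
  qed
  show ?thesis using card_image[OF inj] img cD by simp
qed

lemma sum_card_fibre:
  fixes A :: "'a::{field,finite} poly"
  shows "(\<Sum>c\<in>range (poly A). card (fibre A c)) = CARD('a)"
proof -
  have "UNIV = (\<Union>c\<in>range (poly A). fibre A c)" by (auto simp: fibre_def)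
  then have "CARD('a) = card (\<Union>c\<in>range (poly A). fibre A c)" by simp
  also have "\<dots> = (\<Sum>c\<in>range (poly A). card (fibre A c))"
    by (rule card_UN_disjoint) (auto simp: fibre_def)
  finally show ?thesis by simp
qed

definition fibre_labels :: "nat \<Rightarrow> ('a::{field,finite} poly, 'a) eig_label set" where
  "fibre_labels m = {Fibre A c j | A c j. A \<in> polys_upto0 m \<and> c \<in> range (poly A) \<and> 0 < j \<and> j < card (fibre A c)}"

lemma fibre_labels_eq_image:
  "fibre_labels m = (\<lambda>(A, c, j). Fibre A c j) `
     (SIGMA A:polys_upto0 m. SIGMA c:range (poly A). {j. 0 < j \<and> j < card (fibre A c)})"
  by (auto simp: fibre_labels_def image_iff)

lemma card_fibre_labels:
  "card (fibre_labels m :: ('a::{field,finite} poly, 'a) eig_label set)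
   = (\<Sum>A\<in>(polys_upto0 m :: 'a poly set). CARD('a) - card (range (poly A)))"
proof -
  have fibre_ne: "1 \<le> card (fibre A c)" if "c \<in> range (poly A)" for A :: "'a poly" and c
    using that by (auto simp: fibre_def card_gt_0_iff Suc_le_eq)
  have card_nonzero_below: "card {j. 0 < j \<and> j < N} = N - 1" for N :: nat
  proof -
    have "{j. 0 < j \<and> j < N} = {1..<N}" by auto
    then show ?thesis by simp
  qed
  have "card (fibre_labels m :: ('a poly, 'a) eig_label set)
      = (\<Sum>A\<in>(polys_upto0 m :: 'a poly set). \<Sum>c\<in>range (poly A). card (fibre A c) - 1)"
    unfolding fibre_labels_eq_image
    by (subst card_image) (auto simp: inj_on_def card_SigmaI card_nonzero_below)
  also have "\<dots> = (\<Sum>A\<in>(polys_upto0 m :: 'a poly set). CARD('a) - card (range (poly A)))"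
  proof (rule sum.cong)
    fix A :: "'a poly"
    have "int (\<Sum>c\<in>range (poly A). card (fibre A c) - 1)
        = (\<Sum>c\<in>range (poly A). int (card (fibre A c)) - 1)"
      using fibre_ne by (simp add: of_nat_diff)
    also have "\<dots> = int (CARD('a) - card (range (poly A)))"
      using sum_card_fibre[of A] by (simp add: sum_subtractf card_mono of_nat_diff flip: of_nat_sum)
    finally show "(\<Sum>c\<in>range (poly A). card (fibre A c) - 1) = CARD('a) - card (range (poly A))"
      by linarith
  qed simp
  finally show ?thesis .
qed

lemma finite_fibre_labels[simp]: "finite (fibre_labels m :: ('a::{field,finite} poly, 'a) eig_label set)"
  unfolding fibre_labels_eq_image by (intro finite_imageI finite_SigmaI) auto

lemma eig_labels_split:
  "eig_labels m = (Signed True ` rooted_polys m \<union> Signed False ` rooted_polys m)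
     \<union> (Rootless ` rootless_polys m \<union> fibre_labels m)"
  by (auto simp: eig_labels_def rooted_polys_def rootless_polys_def fibre_labels_def)

lemma finite_eig_labels[simp]: "finite (eig_labels m :: ('a::{field,finite} poly, 'a) eig_label set)"
  unfolding eig_labels_split by (simp add: rooted_polys_def rootless_polys_def)

text \<open>
  The fibre labels and the root-free polynomials are equinumerous (both are counted by
  \<open>\<Sum>\<^sub>A (q - |A(\<F>\<^sub>q)|)\<close>), so the labels number \<open>2 |rooted| + 2 |rootless| = 2 q\<^sup>m\<^sup>+\<^sup>1\<close>.
\<close>
lemma card_eig_labels: "card (eig_labels m :: ('a::{field,finite} poly, 'a) eig_label set) = 2 * CARD('a) ^ Suc m"
proof -
  let ?Y = "rooted_polys m :: 'a poly set" and ?Z = "rootless_polys m :: 'a poly set"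
  have fin: "finite ?Y" "finite ?Z" by (auto simp: rooted_polys_def rootless_polys_def)
  have signed: "card (Signed True ` ?Y \<union> Signed False ` ?Y :: ('a poly, 'a) eig_label set) = 2 * card ?Y"
    using fin by (subst card_Un_disjoint) (auto simp: card_image inj_on_def)
  have zero: "card (Rootless ` ?Z \<union> fibre_labels m :: ('a poly, 'a) eig_label set) = 2 * card ?Z"
  proof -
    have "card (Rootless ` ?Z \<union> fibre_labels m :: ('a poly, 'a) eig_label set)
        = card (Rootless ` ?Z :: ('a poly, 'a) eig_label set) + card (fibre_labels m :: ('a poly, 'a) eig_label set)"
      using fin finite_fibre_labels[of m, where 'a='a]
      by (intro card_Un_disjoint) (auto simp: fibre_labels_def)
    then show ?thesis by (simp add: card_image inj_on_def card_fibre_labels card_rootless_polys)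
  qed
  have "card (eig_labels m :: ('a poly, 'a) eig_label set) = 2 * card ?Y + 2 * card ?Z"
    unfolding eig_labels_split using fin finite_fibre_labels[of m, where 'a='a] signed zero
    by (subst card_Un_disjoint) (auto simp: fibre_labels_def)
  moreover have "card ?Y + card ?Z = card (polys_upto m :: 'a poly set)"
  proof -
    have "polys_upto m = ?Y \<union> ?Z" by (auto simp: rooted_polys_def rootless_polys_def)
    moreover have "card (?Y \<union> ?Z) = card ?Y + card ?Z"
      using fin by (rule card_Un_disjoint) (auto simp: rooted_polys_def rootless_polys_def)
    ultimately show ?thesis by simp
  qed
  ultimately show ?thesis using card_polys_upto[of m, where 'a='a] by linarith
qed

section \<open>The adjacency matrix\<close>

lemma wenger_vertex_list_props:
  fixes m :: nat
  defines "vs \<equiv> wenger_vertex_list m :: ('a::{field,finite} list + 'a list) list"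
  shows "distinct vs" "set vs = Inl ` vecs m \<union> Inr ` vecs m"
proof -
  have "finite (wenger_vertices m :: ('a list + 'a list) set)" unfolding wenger_vertices_eq by simp
  then have "\<exists>xs. distinct xs \<and> set xs = (wenger_vertices m :: ('a list + 'a list) set)"
    using finite_distinct_list by blast
  then have "distinct vs \<and> set vs = wenger_vertices m"
    unfolding vs_def wenger_vertex_list_def by (rule someI_ex)
  then show "distinct vs" "set vs = Inl ` vecs m \<union> Inr ` vecs m"
    unfolding wenger_vertices_eq by auto
qed

lemma length_wenger_vertex_list:
  "length (wenger_vertex_list m :: ('a::{field,finite} list + 'a list) list) = 2 * CARD('a) ^ Suc m"
proof -
  let ?vs = "wenger_vertex_list m :: ('a list + 'a list) list"
  have "length ?vs = card (Inl ` vecs m \<union> Inr ` vecs m :: ('a list + 'a list) set)"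
    using wenger_vertex_list_props[of m, where 'a='a] distinct_card by metis
  also have "\<dots> = card (Inl ` vecs m :: ('a list + 'a list) set) + card (Inr ` vecs m :: ('a list + 'a list) set)"
    by (rule card_Un_disjoint) auto
  also have "\<dots> = 2 * CARD('a) ^ Suc m"
    by (simp add: card_image card_vecs)
  finally show ?thesis .
qed

lemma wenger_matrix_eq:
  fixes m :: nat
  defines "vs \<equiv> wenger_vertex_list m :: ('a::{field,finite} list + 'a list) list"
  shows "wenger_matrix m TYPE('a) = mat (length vs) (length vs) (\<lambda>(i, k). adj_weight m (vs ! i) (vs ! k))"
  unfolding vs_def wenger_matrix_def Let_def adj_weight_def by simp

lemma wenger_matrix_carrier:
  fixes m :: nat
  defines "n \<equiv> length (wenger_vertex_list m :: ('a::{field,finite} list + 'a list) list)"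
  shows "wenger_matrix m TYPE('a) \<in> carrier_mat n n"
  unfolding n_def wenger_matrix_eq by simp

lemma char_poly_wenger_matrix_complex:
  "char_poly (map_mat complex_of_real (wenger_matrix m TYPE('a::{field,finite})))
   = (\<Prod>j\<in>(eig_labels m :: ('a poly, 'a) eig_label set). [:- complex_of_real (eig_value j), 1:])"
proof -
  let ?vs = "wenger_vertex_list m :: ('a list + 'a list) list"
  note vs = wenger_vertex_list_props[of m, where 'a='a]
  show ?thesis unfolding wenger_matrix_eq
  proof (rule char_poly_orthogonal_eigenbasis[where c = "eig_sqnorm m"])
    show "distinct ?vs" by (rule vs(1))
    show "finite (eig_labels m :: ('a poly, 'a) eig_label set)" by simp
    show "card (eig_labels m :: ('a poly, 'a) eig_label set) = length ?vs"
      by (simp add: card_eig_labels length_wenger_vertex_list)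
    fix j :: "('a poly, 'a) eig_label" and v assume j: "j \<in> eig_labels m" and v: "v \<in> set ?vs"
    show "(\<Sum>w\<in>set ?vs. complex_of_real (adj_weight m v w) * eig_vector m j w)
        = complex_of_real (eig_value j) * eig_vector m j v"
      unfolding vs(2) by (rule eigen_eig_vector[OF j v[unfolded vs(2)]])
  next
    fix j j' :: "('a poly, 'a) eig_label" assume "j \<in> eig_labels m" "j' \<in> eig_labels m"
    then show "(\<Sum>v\<in>set ?vs. cnj (eig_vector m j v) * eig_vector m j' v) = (if j = j' then eig_sqnorm m j else 0)"
      unfolding vs(2) by (rule orthogonal_eig_vector)
  next
    fix j :: "('a poly, 'a) eig_label" assume "j \<in> eig_labels m"
    then show "eig_sqnorm m j \<noteq> 0" by (rule eig_sqnorm_nonzero)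
  qed
qed

lemma map_poly_char_poly_wenger_matrix:
  "map_poly complex_of_real (char_poly (wenger_matrix m TYPE('a::{field,finite})))
   = (\<Prod>j\<in>(eig_labels m :: ('a poly, 'a) eig_label set). [:- complex_of_real (eig_value j), 1:])"
  using of_real_hom.char_poly_hom[OF wenger_matrix_carrier] char_poly_wenger_matrix_complex by metis

lemma order_char_poly_wenger_matrix:
  "order x (char_poly (wenger_matrix m TYPE('a::{field,finite})))
   = card {j \<in> (eig_labels m :: ('a poly, 'a) eig_label set). eig_value j = x}"
proof -
  interpret of_real: map_poly_inj_idom_divide_hom complex_of_real ..
  have "order x (char_poly (wenger_matrix m TYPE('a)))
      = order (complex_of_real x) (\<Prod>j\<in>(eig_labels m :: ('a poly, 'a) eig_label set). [:- complex_of_real (eig_value j), 1:])"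
    by (simp flip: of_real.order_hom map_poly_char_poly_wenger_matrix)
  also have "\<dots> = card {j \<in> (eig_labels m :: ('a poly, 'a) eig_label set). complex_of_real (eig_value j) = complex_of_real x}"
    by (rule order_prod_linear_factors) simp
  finally show ?thesis by simp
qed

lemma eigenvalue_wenger_matrix_iff:
  "eigenvalue (wenger_matrix m TYPE('a::{field,finite})) x
   \<longleftrightarrow> (\<exists>j\<in>(eig_labels m :: ('a poly, 'a) eig_label set). eig_value j = x)"
proof -
  have "eigenvalue (wenger_matrix m TYPE('a)) x \<longleftrightarrow> poly (char_poly (wenger_matrix m TYPE('a))) x = 0"
    by (rule eigenvalue_root_char_poly[OF wenger_matrix_carrier])
  also have "\<dots> \<longleftrightarrow> poly (map_poly complex_of_real (char_poly (wenger_matrix m TYPE('a)))) (complex_of_real x) = 0"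
    by (simp add: of_real_hom.poly_map_poly)
  also have "\<dots> \<longleftrightarrow> (\<exists>j\<in>(eig_labels m :: ('a poly, 'a) eig_label set). eig_value j = x)"
    by (auto simp: map_poly_char_poly_wenger_matrix poly_prod_0)
  finally show ?thesis .
qed

section \<open>The spectrum\<close>

lemma num_roots_0: "num_roots (0::'a::{field,finite} poly) = CARD('a)"
  by (simp add: num_roots_def)

lemma num_roots_le: "P \<noteq> 0 \<Longrightarrow> degree P \<le> m \<Longrightarrow> num_roots (P::'a::{field,finite} poly) \<le> m"
  unfolding num_roots_def using card_poly_roots_bound[of P] by simp

lemma exists_poly_num_roots:
  fixes i m :: nat
  assumes "i \<le> m" "i \<le> CARD('a::{field,finite})"
  obtains P :: "'a::{field,finite} poly" where "P \<in> polys_upto m" "num_roots P = i"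
proof -
  obtain S :: "'a set" where S: "card S = i" "finite S"
    using obtain_subset_with_card_n[OF assms(2)] by blast
  define P where "P = (\<Prod>t\<in>S. [:-t, 1:])"
  have "degree P = i" using prod_linear_factors_props[OF S(2)] S by (simp add: P_def)
  moreover have "{s. poly P s = 0} = S" using S(2) by (auto simp: P_def poly_prod_0)
  ultimately show thesis using assms S by (intro that[of P]) (simp_all add: polys_upto_def num_roots_def)
qed

lemma card_field_ge_2: "2 \<le> CARD('a::{field,finite})"
proof -
  have "card {0::'a, 1} = 2" by simp
  moreover have "card {0::'a, 1} \<le> CARD('a)" by (rule card_mono) auto
  ultimately show ?thesis by simp
qed

lemma sign_of_mult_eq_iff: "0 < x \<Longrightarrow> 0 < y \<Longrightarrow> sign_of b * x = sign_of b' * y \<longleftrightarrow> b = b' \<and> x = y"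
  by (cases b; cases b') (auto simp: sign_of_def)

lemma root_scale_eq_iff:
  "root_scale (P :: 'a::{field,finite} poly) = sqrt (real i * real CARD('a)) \<longleftrightarrow> num_roots P = i"
  using finite_UNIV_card_ge_0[where 'a='a] by (simp add: root_scale_def mult.commute)

lemma eig_labels_level:
  assumes "0 < i"
  shows "{j \<in> eig_labels m. eig_value j = sign_of b * sqrt (real i * real CARD('a::{field,finite}))}
       = Signed b ` {P :: 'a poly \<in> polys_upto m. num_roots P = i}"
proof (intro equalityI subsetI)
  have r: "0 < sqrt (real i * real CARD('a))" using assms finite_UNIV_card_ge_0[where 'a='a] by simp
  fix j :: "('a poly, 'a) eig_label"
  assume "j \<in> {j \<in> eig_labels m. eig_value j = sign_of b * sqrt (real i * real CARD('a))}"
  then have j: "j \<in> eig_labels m" "eig_value j = sign_of b * sqrt (real i * real CARD('a))" by auto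
  from j(1) show "j \<in> Signed b ` {P \<in> polys_upto m. num_roots P = i}"
  proof (cases rule: eig_labelsE)
    case (Signed b' P)
    then show ?thesis
      using j(2) sign_of_mult_eq_iff[OF root_scale_pos[OF Signed(3)] r, of b' b] root_scale_eq_iff[of P i]
      by auto
  qed (use j(2) r in auto)
next
  fix j :: "('a poly, 'a) eig_label" assume "j \<in> Signed b ` {P \<in> polys_upto m. num_roots P = i}"
  then obtain P where "j = Signed b P" "P \<in> polys_upto m" "num_roots P = i" by auto
  then show "j \<in> {j \<in> eig_labels m. eig_value j = sign_of b * sqrt (real i * real CARD('a))}"
    using assms Signed_in_eig_labels[of P m b] root_scale_eq_iff[of P i] by auto
qed

lemma eig_labels_zero_level:
  "{j \<in> eig_labels m. eig_value j = 0} = Rootless ` rootless_polys m \<union> (fibre_labels m :: ('a::{field,finite} poly, 'a) eig_label set)"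
proof (intro equalityI subsetI)
  fix j :: "('a poly, 'a) eig_label" assume "j \<in> {j \<in> eig_labels m. eig_value j = 0}"
  then have j: "j \<in> eig_labels m" "eig_value j = 0" by auto
  from j(1) show "j \<in> Rootless ` rootless_polys m \<union> fibre_labels m"
  proof (cases rule: eig_labelsE)
    case (Signed b P)
    then show ?thesis using j(2) root_scale_pos[of P] by simp
  qed (auto simp: rootless_polys_def fibre_labels_def)
qed (auto simp: eig_labels_def rootless_polys_def fibre_labels_def)

lemma eig_values_eq:
  assumes "m < CARD('a::{field,finite})"
  shows "eig_value ` (eig_labels m :: ('a poly, 'a) eig_label set)
       = {real CARD('a), - real CARD('a), 0}
         \<union> {s * sqrt (real i * real CARD('a)) | s i. s \<in> {1, -1} \<and> i \<in> {1..m}}"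
    (is "_ = ?E")
proof (intro equalityI subsetI)
  fix x assume "x \<in> eig_value ` (eig_labels m :: ('a poly, 'a) eig_label set)"
  then obtain j :: "('a poly, 'a) eig_label" where j: "j \<in> eig_labels m" "x = eig_value j" by blast
  from j(1) show "x \<in> ?E"
  proof (cases rule: eig_labelsE)
    case (Signed b P)
    show ?thesis
    proof (cases "P = 0")
      case True
      then show ?thesis using j Signed by (cases b) (auto simp: sign_of_def root_scale_def num_roots_0)
    next
      case False
      have "num_roots P \<le> m" using num_roots_le[OF False] Signed by (simp add: polys_upto_def)
      moreover have "x = sign_of b * sqrt (real (num_roots P) * real CARD('a))"
        using j Signed by (simp add: root_scale_def mult.commute)
      moreover have "sign_of b \<in> {1, -1}" by (simp add: sign_of_def)
      ultimately show ?thesis using Signed by fastforce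
    qed
  qed (use j in auto)
next
  have zero: "(0::'a poly) \<in> polys_upto m" "0 < num_roots (0::'a poly)"
    by (auto simp: polys_upto_def num_roots_0)
  have one: "(1::'a poly) \<in> polys_upto m" "num_roots (1::'a poly) = 0"
    by (auto simp: polys_upto_def num_roots_def)
  have in_image: "eig_value j \<in> eig_value ` (eig_labels m :: ('a poly, 'a) eig_label set)" if "j \<in> eig_labels m"
    for j :: "('a poly, 'a) eig_label"
    using that by blast
  fix x assume "x \<in> ?E"
  then consider "x = real CARD('a)" | "x = - real CARD('a)" | "x = 0"
    | s i where "s \<in> {1, -1}" "i \<in> {1..m}" "x = s * sqrt (real i * real CARD('a))"
    by blast
  then show "x \<in> eig_value ` (eig_labels m :: ('a poly, 'a) eig_label set)"
  proof cases
    case 1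
    then show ?thesis using in_image[OF Signed_in_eig_labels[OF zero, of True]]
      by (simp add: sign_of_def root_scale_def num_roots_0)
  next
    case 2
    then show ?thesis using in_image[OF Signed_in_eig_labels[OF zero, of False]]
      by (simp add: sign_of_def root_scale_def num_roots_0)
  next
    case 3
    then show ?thesis using in_image[OF Rootless_in_eig_labels[OF one]] by simp
  next
    case (4 s i)
    obtain P :: "'a poly" where P: "P \<in> polys_upto m" "num_roots P = i"
      using exists_poly_num_roots[of i m, where 'a='a] 4 assms by auto
    have "eig_value (Signed (s = 1) P) = x" using 4 P root_scale_eq_iff[of P i] by (auto simp: sign_of_def)
    moreover have "0 < num_roots P" using 4 P by simp
    ultimately show ?thesis using in_image[OF Signed_in_eig_labels[OF P(1)], of "s = 1"] by simp
  qed
qed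

lemma order_char_poly_wenger_matrix_nonzero:
  assumes "1 \<le> i" "i \<le> m" "m < CARD('a::{field,finite})"
  shows "int (order (sign_of b * sqrt (real i * real CARD('a))) (char_poly (wenger_matrix m TYPE('a))))
       = wenger_mult CARD('a) m i"
proof -
  have "order (sign_of b * sqrt (real i * real CARD('a))) (char_poly (wenger_matrix m TYPE('a)))
      = card (Signed b ` {P \<in> polys_upto m. num_roots P = i} :: ('a poly, 'a) eig_label set)"
    using assms by (simp add: order_char_poly_wenger_matrix eig_labels_level)
  also have "\<dots> = card {P :: 'a poly \<in> polys_upto m. num_roots P = i}"
    by (rule card_image) (simp add: inj_on_def)
  finally show ?thesis using card_polys_upto_num_roots[of i m] assms by simp
qed

lemma order_char_poly_wenger_matrix_0:
  assumes "m < CARD('a::{field,finite})"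
  shows "int (order 0 (char_poly (wenger_matrix m TYPE('a)))) = 2 * wenger_mult CARD('a) m 0"
proof -
  have "order 0 (char_poly (wenger_matrix m TYPE('a)))
      = card (Rootless ` rootless_polys m \<union> (fibre_labels m :: ('a poly, 'a) eig_label set))"
    by (simp add: order_char_poly_wenger_matrix eig_labels_zero_level)
  also have "\<dots> = card (Rootless ` rootless_polys m :: ('a poly, 'a) eig_label set)
      + card (fibre_labels m :: ('a poly, 'a) eig_label set)"
    using finite_fibre_labels[of m, where 'a='a]
    by (intro card_Un_disjoint) (auto simp: rootless_polys_def fibre_labels_def)
  also have "\<dots> = 2 * card (rootless_polys m :: 'a poly set)"
    by (simp add: card_image inj_on_def card_fibre_labels card_rootless_polys)
  finally show ?thesis
    using card_polys_upto_num_roots[of 0 m, where 'a='a] assms by (simp add: rootless_polys_def)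
qed

theorem theorem1:
  fixes m :: nat
  defines "q \<equiv> card (UNIV :: 'a::{field,finite} set)"
  assumes "1 \<le> m" and "m \<le> q - 1"
  shows "{ev. eigenvalue (wenger_matrix m TYPE('a)) ev} =
           {real q, - real q, 0} \<union>
           {s * sqrt (real i * real q) | s i. s \<in> {1, -1} \<and> i \<in> {1..m}}
       \<and> (\<forall>i\<in>{1..m}.
           int (order (sqrt (real i * real q)) (char_poly (wenger_matrix m TYPE('a)))) = wenger_mult q m i
         \<and> int (order (- sqrt (real i * real q)) (char_poly (wenger_matrix m TYPE('a)))) = wenger_mult q m i)
       \<and> int (order 0 (char_poly (wenger_matrix m TYPE('a)))) = 2 * wenger_mult q m 0"
proof -
  have mq: "m < q" using assms(3) card_field_ge_2[where 'a='a] by (simp add: q_def)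
  have "{ev. eigenvalue (wenger_matrix m TYPE('a)) ev} = eig_value ` (eig_labels m :: ('a poly, 'a) eig_label set)"
    by (auto simp: eigenvalue_wenger_matrix_iff)
  moreover have "\<forall>i\<in>{1..m}.
           int (order (sqrt (real i * real q)) (char_poly (wenger_matrix m TYPE('a)))) = wenger_mult q m i
         \<and> int (order (- sqrt (real i * real q)) (char_poly (wenger_matrix m TYPE('a)))) = wenger_mult q m i"
    using order_char_poly_wenger_matrix_nonzero[of _ m True, where 'a='a]
      order_char_poly_wenger_matrix_nonzero[of _ m False, where 'a='a] mq
    by (simp add: q_def sign_of_def)
  ultimately show ?thesis
    using eig_values_eq[OF mq[unfolded q_def]] order_char_poly_wenger_matrix_0[OF mq[unfolded q_def]]
    by (simp add: q_def)
qed

end
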